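(* In the setting described in the context, let $\sigma_w,\sigma_v$ be real scalars, suppose $W=\rho I$ for some $\rho>0$, and consider $$\tilde\Sigma_\tau(s)=R^T\big(sI+L_{e,s}^\tau RWR^T\big)^{-1}\begin{bmatrix}\sigma_wD_\tau^TE^{-1/2} & -\sigma_vL_{e,s}^\tau RW^{1/2}\end{bmatrix}.$$ Then $$\|\tilde\Sigma_\tau\|_\infty^2=\frac{1}{\rho^2}\sigma_w^2\,\bar\sigma\big(R^T(RR^TL_{e,s}^\tau RR^T)^{-1}R\big)+\frac{1}{\rho}\sigma_v^2.$$
   Context: Let $\mathcal G$ be an undirected, connected graph without self-loops, with node set $\{1,\dots,n\}$ ($n\ge2$) and edge set $\mathcal E$, $m=|\mathcal E|$. Give each edge an arbitrary orientation; the incidence matrix $D\in\mathbb R^{n\times m}$ has $D_{il}=1$ if node $i$ is the initial node of edge $l$, $-1$ if it is the terminal node, and $0$ otherwise. Fix a spanning tree $\mathcal G_\tau$ and order the edges so the first $n-1$ are tree edges; write $D=[D_\tau\ D_c]$ with $D_\tau\in\mathbb R^{n\times(n-1)}$. Set $T_\tau^c=(D_\tau^TD_\tau)^{-1}D_\tau^TD_c$ and $R=[I_{n-1}\ T_\tau^c]\in\mathbb R^{(n-1)\times m}$. $W\in\mathbb R^{m\times m}$ is the (diagonal, positive) edge-weight matrix and $E=\mathrm{diag}(\epsilon_1,\dots,\epsilon_n)$, $\epsilon_i>0$, is the time-scale matrix; powers of diagonal matrices are taken entrywise. Define $L_{e,s}^\tau=D_\tau^TE^{-1}D_\tau$. For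 a stable transfer matrix $\Phi(s)$, $\|\Phi\|_\infty=\sup_{\omega\in\mathbb R}\bar\sigma(\Phi(j\omega))$ where $\bar\sigma$ is the largest singular value. *)

theory Defs
  imports "Jordan_Normal_Form.Jordan_Normal_Form_Existence" "Jordan_Normal_Form.Schur_Decomposition"
begin

text \<open>Nodes are 0,...,n-1 (0-indexed). The graph is given by a list es of m oriented edges
 (initial node, terminal node); the first n-1 edges are the spanning-tree edges.\<close>

definition edge_rel :: "(nat \<times> nat) list \<Rightarrow> (nat \<times> nat) set" where
  "edge_rel es = {(a,b). (a,b) \<in> set es \<or> (b,a) \<in> set es}"

definition valid_graph_with_tree :: "nat \<Rightarrow> (nat \<times> nat) list \<Rightarrow> bool" where
  "valid_graph_with_tree n es \<longleftrightarrow>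
     2 \<le> n \<and> n - 1 \<le> length es \<and>
     (\<forall>l < length es. fst (es!l) < n \<and> snd (es!l) < n \<and> fst (es!l) \<noteq> snd (es!l)) \<and>
     (\<forall>l < length es. \<forall>l' < length es. l \<noteq> l' \<longrightarrow>
         {fst (es!l), snd (es!l)} \<noteq> {fst (es!l'), snd (es!l')}) \<and>
     (\<forall>i < n. (0, i) \<in> (edge_rel (take (n - 1) es))\<^sup>*)"

definition incidence :: "nat \<Rightarrow> (nat \<times> nat) list \<Rightarrow> real mat" where
  "incidence n es = mat n (length es) (\<lambda>(i,l).
      if i = fst (es!l) then 1 else if i = snd (es!l) then -1 else 0)"

definition D_tree :: "nat \<Rightarrow> (nat \<times> nat) list \<Rightarrow> real mat" where
  "D_tree n es = mat n (n - 1) (\<lambda>(i,l). incidence n es $$ (i,l))"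

definition D_cotree :: "nat \<Rightarrow> (nat \<times> nat) list \<Rightarrow> real mat" where
  "D_cotree n es = mat n (length es - (n - 1)) (\<lambda>(i,l). incidence n es $$ (i, l + (n - 1)))"

definition minv :: "'a::field mat \<Rightarrow> 'a mat" where
  "minv A = (SOME B. B \<in> carrier_mat (dim_row A) (dim_row A) \<and>
                     A * B = 1\<^sub>m (dim_row A) \<and> B * A = 1\<^sub>m (dim_row A))"

definition T_tau :: "nat \<Rightarrow> (nat \<times> nat) list \<Rightarrow> real mat" where
  "T_tau n es = minv ((D_tree n es)\<^sup>T * D_tree n es) * (D_tree n es)\<^sup>T * D_cotree n es"

definition R_mat :: "nat \<Rightarrow> (nat \<times> nat) list \<Rightarrow> real mat" where
  "R_mat n es = mat (n - 1) (length es) (\<lambda>(i,l).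
      if l < n - 1 then (if i = l then 1 else 0) else T_tau n es $$ (i, l - (n - 1)))"

definition diagm :: "nat \<Rightarrow> (nat \<Rightarrow> 'a::zero) \<Rightarrow> 'a mat" where
  "diagm k d = mat k k (\<lambda>(i,j). if i = j then d i else 0)"

definition diag_powr :: "real mat \<Rightarrow> real \<Rightarrow> real mat" where
  "diag_powr A p = diagm (dim_row A) (\<lambda>i. (A $$ (i,i)) powr p)"

definition L_es :: "nat \<Rightarrow> (nat \<times> nat) list \<Rightarrow> real mat \<Rightarrow> real mat" where
  "L_es n es E = (D_tree n es)\<^sup>T * minv E * D_tree n es"

definition sigma_max :: "complex mat \<Rightarrow> real" where
  "sigma_max A = sqrt (Max {Re k | k. eigenvalue (mat_adjoint A * A) k})"

definition sigma_max_real :: "real mat \<Rightarrow> real" where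
  "sigma_max_real A = sigma_max (map_mat complex_of_real A)"

definition hinf_norm :: "(complex \<Rightarrow> complex mat) \<Rightarrow> real" where
  "hinf_norm Phi = (SUP \<omega>::real. sigma_max (Phi (\<i> * complex_of_real \<omega>)))"

definition cmat :: "real mat \<Rightarrow> complex mat" where
  "cmat A = map_mat complex_of_real A"

text \<open>Sigma_tilde_tau(s) = R^T (sI + L R W R^T)^{-1} [sigma_w D_tau^T E^{-1/2} , - sigma_v L R W^{1/2}]\<close>
definition Sigma_tilde :: "nat \<Rightarrow> (nat \<times> nat) list \<Rightarrow> real mat \<Rightarrow> real mat \<Rightarrow> real \<Rightarrow> real
     \<Rightarrow> complex \<Rightarrow> complex mat" where
  "Sigma_tilde n es W E sw sv s =
     (let R = R_mat n es; L = L_es n es E;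
          B = four_block_mat (sw \<cdot>\<^sub>m ((D_tree n es)\<^sup>T * diag_powr E (-1/2)))
                             (- sv \<cdot>\<^sub>m (L * R * diag_powr W (1/2)))
                             (0\<^sub>m 0 n) (0\<^sub>m 0 (length es))
      in cmat R\<^sup>T * minv (s \<cdot>\<^sub>m 1\<^sub>m (n - 1) + cmat (L * R * W * R\<^sup>T)) * cmat B)"

end

theory Submission
  imports Defs "Jordan_Normal_Form.Spectral_Radius"
begin

text \<open>With W = rho I the transfer matrix is Sigma(s) = R^T (s I + rho L M)^-1 B, where M = R R^T,
  L = L_{e,s}^tau is positive definite and B B^T = sigma_w^2 L + sigma_v^2 rho L M L.
  For s = j omega write R y = cnj s t + rho M L t with Sigma(s)^H y = B^T t. Then
  |Sigma(s)^H y|^2 = sigma_w^2 t^H L t + sigma_v^2 rho u^H M u with u = L t, and since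
  L^-1 = M N^-1 M for N = M L M, t^H L t <= kappa u^H M u, where kappa is the largest eigenvalue
  of X = R^T N^-1 R. On the other hand (R y)^H M^-1 (R y) = |s|^2 t^H M^-1 t + rho^2 u^H M u, the
  cross terms cancelling because s is imaginary, and it is at most |y|^2 because R^T M^-1 R is an
  orthogonal projection. Hence |Sigma(s)^H y|^2 <= mu |y|^2 with
  mu = sigma_w^2 kappa / rho^2 + sigma_v^2 / rho. At s = 0 an eigenvector of X for kappa is an
  eigenvector of Sigma(0) Sigma(0)^H for mu, so the H-infinity norm is attained at zero frequency.
  The top eigenvector of a Hermitian matrix is obtained variationally, from the supremum of its
  Rayleigh quotient.\<close>

section \<open>Complex matrices, adjoints and inner products\<close>

lemma mat_adjoint_index [simp]:
  "i < dim_col A \<Longrightarrow> j < dim_row A \<Longrightarrow> mat_adjoint A $$ (i, j) = conjugate (A $$ (j, i))"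
  unfolding mat_adjoint_def by (simp add: mat_of_rows_def)

lemma mat_adjoint_dims [simp]:
  "dim_row (mat_adjoint A) = dim_col A" "dim_col (mat_adjoint A) = dim_row A"
  unfolding mat_adjoint_def by simp_all

lemma mat_adjoint_carrier [simp]: "A \<in> carrier_mat p q \<Longrightarrow> mat_adjoint A \<in> carrier_mat q p"
  by auto

lemma mat_adjoint_mult_vec_carrier:
  "A \<in> carrier_mat p q \<Longrightarrow> y \<in> carrier_vec p \<Longrightarrow> mat_adjoint A *\<^sub>v y \<in> carrier_vec q"
  by (rule mult_mat_vec_carrier[OF mat_adjoint_carrier])

lemma mat_adjoint_adjoint [simp]: "mat_adjoint (mat_adjoint A) = (A :: complex mat)"
  by (rule eq_matI) auto

lemma mat_adjoint_mult:
  assumes "A \<in> carrier_mat p q" "B \<in> carrier_mat q r"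
  shows "mat_adjoint (A * B) = mat_adjoint B * mat_adjoint (A :: complex mat)"
  using assms by (intro eq_matI) (auto simp: scalar_prod_def mult.commute intro!: sum.cong)

lemma mat_adjoint_add:
  assumes "A \<in> carrier_mat p q" "B \<in> carrier_mat p q"
  shows "mat_adjoint (A + B) = mat_adjoint A + mat_adjoint (B :: complex mat)"
  using assms by (intro eq_matI) auto

lemma mat_adjoint_smult: "mat_adjoint (c \<cdot>\<^sub>m A) = cnj c \<cdot>\<^sub>m mat_adjoint (A :: complex mat)"
  by (intro eq_matI) auto

lemma mat_adjoint_one [simp]: "mat_adjoint (1\<^sub>m k :: complex mat) = 1\<^sub>m k"
  by (intro eq_matI) auto

lemma cscalar_prod_mat_adjoint:
  fixes A :: "complex mat"
  assumes A: "A \<in> carrier_mat p q" and x: "x \<in> carrier_vec q" and y: "y \<in> carrier_vec p"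
  shows "(A *\<^sub>v x) \<bullet>c y = x \<bullet>c (mat_adjoint A *\<^sub>v y)"
proof -
  have "(A *\<^sub>v x) \<bullet>c y = (\<Sum>i<p. (\<Sum>j<q. A $$ (i, j) * x $ j) * cnj (y $ i))"
    using A x y by (auto simp: scalar_prod_def lessThan_atLeast0)
  also have "\<dots> = (\<Sum>i<p. \<Sum>j<q. x $ j * (A $$ (i, j) * cnj (y $ i)))"
    unfolding sum_distrib_right by (simp add: mult_ac)
  also have "\<dots> = (\<Sum>j<q. \<Sum>i<p. x $ j * (A $$ (i, j) * cnj (y $ i)))"
    by (rule sum.swap)
  also have "\<dots> = x \<bullet>c (mat_adjoint A *\<^sub>v y)"
    using A x y by (auto simp: scalar_prod_def lessThan_atLeast0 sum_distrib_left intro!: sum.cong)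
  finally show ?thesis .
qed

lemma cscalar_prod_add_left:
  "x \<in> carrier_vec n \<Longrightarrow> y \<in> carrier_vec n \<Longrightarrow> z \<in> carrier_vec n \<Longrightarrow>
    (x + y) \<bullet>c z = x \<bullet>c z + y \<bullet>c (z :: complex vec)"
  by (auto simp: scalar_prod_def distrib_right sum.distrib)

lemma cscalar_prod_add_right:
  "x \<in> carrier_vec n \<Longrightarrow> y \<in> carrier_vec n \<Longrightarrow> z \<in> carrier_vec n \<Longrightarrow>
    x \<bullet>c (y + z) = x \<bullet>c y + x \<bullet>c (z :: complex vec)"
  by (auto simp: scalar_prod_def distrib_left sum.distrib)

lemma cscalar_prod_diff_left:
  "x \<in> carrier_vec n \<Longrightarrow> y \<in> carrier_vec n \<Longrightarrow> z \<in> carrier_vec n \<Longrightarrow>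
    (x - y) \<bullet>c z = x \<bullet>c z - y \<bullet>c (z :: complex vec)"
  by (auto simp: scalar_prod_def left_diff_distrib sum_subtractf)

lemma cscalar_prod_diff_right:
  "x \<in> carrier_vec n \<Longrightarrow> y \<in> carrier_vec n \<Longrightarrow> z \<in> carrier_vec n \<Longrightarrow>
    x \<bullet>c (y - z) = x \<bullet>c y - x \<bullet>c (z :: complex vec)"
  by (auto simp: scalar_prod_def right_diff_distrib sum_subtractf)

lemma cscalar_prod_smult_left:
  "x \<in> carrier_vec n \<Longrightarrow> y \<in> carrier_vec n \<Longrightarrow> (c \<cdot>\<^sub>v x) \<bullet>c y = c * (x \<bullet>c (y :: complex vec))"
  by (auto simp: scalar_prod_def sum_distrib_left mult_ac)

lemma cscalar_prod_smult_right:
  "x \<in> carrier_vec n \<Longrightarrow> y \<in> carrier_vec n \<Longrightarrow> x \<bullet>c (c \<cdot>\<^sub>v y) = cnj c * (x \<bullet>c (y :: complex vec))"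
  by (auto simp: scalar_prod_def sum_distrib_left mult_ac)

lemma cscalar_prod_swap:
  "x \<in> carrier_vec n \<Longrightarrow> y \<in> carrier_vec n \<Longrightarrow> y \<bullet>c x = cnj (x \<bullet>c (y :: complex vec))"
  by (auto simp: scalar_prod_def mult_ac)

lemma cscalar_prod_lincomb:
  fixes x y z w :: "complex vec"
  assumes "x \<in> carrier_vec n" "y \<in> carrier_vec n" "z \<in> carrier_vec n" "w \<in> carrier_vec n"
  shows "(a \<cdot>\<^sub>v x + b \<cdot>\<^sub>v y) \<bullet>c (c \<cdot>\<^sub>v z + d \<cdot>\<^sub>v w) =
    a * cnj c * (x \<bullet>c z) + a * cnj d * (x \<bullet>c w) + b * cnj c * (y \<bullet>c z) + b * cnj d * (y \<bullet>c w)"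
  using assms by (simp add: cscalar_prod_add_left[of _ n] cscalar_prod_add_right[of _ n]
      cscalar_prod_smult_left[of _ n] cscalar_prod_smult_right[of _ n] algebra_simps)

definition sqnorm :: "complex vec \<Rightarrow> real" where
  "sqnorm x = Re (x \<bullet>c x)"

lemma cscalar_prod_self_sum: "x \<bullet>c x = of_real (\<Sum>i<dim_vec x. (cmod (x $ i))\<^sup>2)"
proof -
  have "x \<bullet>c x = (\<Sum>i<dim_vec x. x $ i * cnj (x $ i))"
    by (simp add: scalar_prod_def lessThan_atLeast0)
  also have "\<dots> = (\<Sum>i<dim_vec x. of_real ((cmod (x $ i))\<^sup>2))"
    by (intro sum.cong refl) (metis complex_norm_square)
  finally show ?thesis by simp
qed

lemma sqnorm_sum: "sqnorm x = (\<Sum>i<dim_vec x. (cmod (x $ i))\<^sup>2)"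
  unfolding sqnorm_def cscalar_prod_self_sum by simp

lemma cscalar_prod_self: "x \<bullet>c x = of_real (sqnorm x)"
  unfolding sqnorm_sum cscalar_prod_self_sum ..

lemma sqnorm_nonneg: "sqnorm x \<ge> 0"
  unfolding sqnorm_sum by (auto intro: sum_nonneg)

lemma sqnorm_eq_0_iff: "x \<in> carrier_vec n \<Longrightarrow> sqnorm x = 0 \<longleftrightarrow> x = 0\<^sub>v n"
  using conjugate_square_eq_0_vec[of x n] unfolding cscalar_prod_self by simp

lemma sqnorm_pos: "x \<in> carrier_vec n \<Longrightarrow> x \<noteq> 0\<^sub>v n \<Longrightarrow> sqnorm x > 0"
  using sqnorm_eq_0_iff sqnorm_nonneg by (metis less_eq_real_def)

lemma sqnorm_zero [simp]: "sqnorm (0\<^sub>v n) = 0"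
  by (simp add: sqnorm_sum)

lemma sqnorm_unit_vec: assumes "i < n" shows "sqnorm (unit_vec n i) = 1"
proof -
  have "sqnorm (unit_vec n i) = (\<Sum>j<n. if j = i then 1 else 0)"
    unfolding sqnorm_sum by (intro sum.cong) (auto simp: unit_vec_def)
  thus ?thesis using assms by simp
qed

lemma sqnorm_smult: "x \<in> carrier_vec n \<Longrightarrow> sqnorm (a \<cdot>\<^sub>v x) = (cmod a)\<^sup>2 * sqnorm x"
  by (simp add: sqnorm_sum power_mult_distrib norm_mult sum_distrib_left)

lemma norm_index_le_sqrt_sqnorm: "j < dim_vec x \<Longrightarrow> cmod (x $ j) \<le> sqrt (sqnorm x)"
  unfolding sqnorm_sum by (rule real_le_rsqrt, rule member_le_sum) auto

lemma smult_zero_left_vec: "v \<in> carrier_vec n \<Longrightarrow> 0 \<cdot>\<^sub>v v = (0\<^sub>v n :: 'a :: semiring_0 vec)"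
  by (intro eq_vecI) auto

lemma unit_vec_nonzero: "i < n \<Longrightarrow> unit_vec n i \<noteq> (0\<^sub>v n :: 'a :: zero_neq_one vec)"
  by (metis index_unit_vec(1) index_zero_vec(1) zero_neq_one)

lemma mult_mat_vec_zero: "A \<in> carrier_mat p q \<Longrightarrow> A *\<^sub>v 0\<^sub>v q = (0\<^sub>v p :: 'a :: comm_ring_1 vec)"
  by (intro eq_vecI) (auto simp: scalar_prod_def)

lemma transpose_smult_mat: "(c \<cdot>\<^sub>m A)\<^sup>T = c \<cdot>\<^sub>m A\<^sup>T"
  by (intro eq_matI) auto

lemma smult_smult_mat: "a \<cdot>\<^sub>m (b \<cdot>\<^sub>m A) = (a * b) \<cdot>\<^sub>m (A :: 'a :: semigroup_mult mat)"
  by (intro eq_matI) (auto simp: mult.assoc)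

lemma smult_gram_mat:
  "A \<in> carrier_mat p q \<Longrightarrow> (c \<cdot>\<^sub>m A) * (c \<cdot>\<^sub>m A)\<^sup>T = c\<^sup>2 \<cdot>\<^sub>m (A * A\<^sup>T :: 'a :: comm_ring_1 mat)"
  by (intro eq_matI) (auto simp: scalar_prod_def sum_distrib_left mult_ac power2_eq_square)

lemma cmat_carrier [simp]: "A \<in> carrier_mat p q \<Longrightarrow> cmat A \<in> carrier_mat p q"
  unfolding cmat_def by simp

lemma cmat_dims [simp]: "dim_row (cmat A) = dim_row A" "dim_col (cmat A) = dim_col A"
  unfolding cmat_def by simp_all

lemma cmat_mult_vec_carrier [simp]:
  "A \<in> carrier_mat p r \<Longrightarrow> x \<in> carrier_vec r \<Longrightarrow> cmat A *\<^sub>v x \<in> carrier_vec p"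
  by (rule mult_mat_vec_carrier[OF cmat_carrier])

lemma mat_adjoint_cmat: "mat_adjoint (cmat A) = cmat A\<^sup>T"
  unfolding cmat_def by (rule eq_matI) auto

lemma cmat_mult: "A \<in> carrier_mat p q \<Longrightarrow> B \<in> carrier_mat q r \<Longrightarrow> cmat (A * B) = cmat A * cmat B"
  unfolding cmat_def by (rule of_real_hom.mat_hom_mult)

lemma cmat_smult: "cmat (c \<cdot>\<^sub>m A) = of_real c \<cdot>\<^sub>m cmat A"
  unfolding cmat_def by (rule eq_matI) auto

lemma cmat_add: "A \<in> carrier_mat p q \<Longrightarrow> B \<in> carrier_mat p q \<Longrightarrow> cmat (A + B) = cmat A + cmat B"
  unfolding cmat_def by (intro eq_matI) auto

lemma cmat_one: "cmat (1\<^sub>m k) = 1\<^sub>m k"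
  unfolding cmat_def by (rule eq_matI) auto

lemma det_cmat: "det (cmat A) = of_real (det A)"
  unfolding cmat_def by simp

lemma cmat_mult_mat_vec:
  assumes "A \<in> carrier_mat p q" "B \<in> carrier_mat q r" "x \<in> carrier_vec r"
  shows "cmat (A * B) *\<^sub>v x = cmat A *\<^sub>v (cmat B *\<^sub>v x)"
  unfolding cmat_mult[OF assms(1,2)] using assms by (intro assoc_mult_mat_vec) auto

lemma cmat_inverse_mult_vec:
  assumes "P \<in> carrier_mat k k" "Q \<in> carrier_mat k k" "P * Q = 1\<^sub>m k" "x \<in> carrier_vec k"
  shows "cmat P *\<^sub>v (cmat Q *\<^sub>v x) = x"
  using cmat_mult_mat_vec[OF assms(1,2,4)] assms(3,4) by (simp add: cmat_one)

lemma cmat_smult_mult_vec: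
  "A \<in> carrier_mat p r \<Longrightarrow> x \<in> carrier_vec r \<Longrightarrow> cmat (c \<cdot>\<^sub>m A) *\<^sub>v x = of_real c \<cdot>\<^sub>v (cmat A *\<^sub>v x)"
  unfolding cmat_smult by (intro eq_vecI) (auto simp: scalar_prod_def sum_distrib_left mult.assoc)

lemma cscalar_prod_cmat_transpose:
  "A \<in> carrier_mat p q \<Longrightarrow> x \<in> carrier_vec q \<Longrightarrow> y \<in> carrier_vec p \<Longrightarrow>
    (cmat A *\<^sub>v x) \<bullet>c y = x \<bullet>c (cmat A\<^sup>T *\<^sub>v y)"
  using cscalar_prod_mat_adjoint[OF cmat_carrier] by (simp add: mat_adjoint_cmat)

lemma cscalar_prod_cmat_symmetric:
  "A \<in> carrier_mat p p \<Longrightarrow> A\<^sup>T = A \<Longrightarrow> x \<in> carrier_vec p \<Longrightarrow> y \<in> carrier_vec p \<Longrightarrow>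
    (cmat A *\<^sub>v x) \<bullet>c y = x \<bullet>c (cmat A *\<^sub>v y)"
  using cscalar_prod_cmat_transpose[of A p p x y] by simp

lemma det_nonzero_if_cmat_injective:
  assumes A: "A \<in> carrier_mat k k"
    and inj: "\<And>x. x \<in> carrier_vec k \<Longrightarrow> cmat A *\<^sub>v x = 0\<^sub>v k \<Longrightarrow> x = 0\<^sub>v k"
  shows "det A \<noteq> 0"
  using det_0_iff_vec_prod_zero[OF cmat_carrier[OF A]] inj by (auto simp: det_cmat)

lemma minv_eqI:
  assumes A: "(A :: 'a :: field mat) \<in> carrier_mat k k" and B: "B \<in> carrier_mat k k"
    and AB: "A * B = 1\<^sub>m k"
  shows "minv A = B"
proof -
  have BA: "B * A = 1\<^sub>m k" by (rule mat_mult_left_right_inverse[OF A B AB])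
  have "\<exists>B. B \<in> carrier_mat k k \<and> A * B = 1\<^sub>m k \<and> B * A = 1\<^sub>m k"
    using B AB BA by blast
  hence B': "minv A \<in> carrier_mat k k" "minv A * A = 1\<^sub>m k"
    using someI_ex[of "\<lambda>B. B \<in> carrier_mat k k \<and> A * B = 1\<^sub>m k \<and> B * A = 1\<^sub>m k"] A
    unfolding minv_def by auto
  have "minv A = (minv A * A) * B"
    using B'(1) B by (simp add: assoc_mult_mat[OF B'(1) A B] AB)
  thus ?thesis using B'(2) B by simp
qed

lemma minv_inverse:
  assumes A: "(A :: 'a :: field mat) \<in> carrier_mat k k" and d: "det A \<noteq> 0"
  shows "minv A \<in> carrier_mat k k" "A * minv A = 1\<^sub>m k" "minv A * A = 1\<^sub>m k"
proof -
  obtain B where B: "B \<in> carrier_mat k k" and BA: "B * A = 1\<^sub>m k"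
    using det_non_zero_imp_unit[OF A d] unfolding Units_def ring_mat_def by auto
  have AB: "A * B = 1\<^sub>m k" by (rule mat_mult_left_right_inverse[OF B A BA])
  show "minv A \<in> carrier_mat k k" "A * minv A = 1\<^sub>m k" "minv A * A = 1\<^sub>m k"
    using minv_eqI[OF A B AB] B AB BA by auto
qed

lemma minv_symmetric:
  assumes M: "(M :: 'a :: field mat) \<in> carrier_mat k k" and d: "det M \<noteq> 0" and s: "M\<^sup>T = M"
  shows "(minv M)\<^sup>T = minv M"
proof -
  note Mi = minv_inverse[OF M d]
  have "M * (minv M)\<^sup>T = 1\<^sub>m k"
    using arg_cong[OF Mi(3), of transpose_mat] transpose_mult[OF Mi(1) M] s by simp
  from minv_eqI[OF M _ this] Mi(1) show ?thesis by simp
qed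

section \<open>Hermitian matrices and the largest singular value\<close>

definition entrywise_norm :: "complex mat \<Rightarrow> real" where
  "entrywise_norm A = (\<Sum>i<dim_row A. \<Sum>j<dim_col A. cmod (A $$ (i, j)))"

lemma entrywise_norm_nonneg: "entrywise_norm A \<ge> 0"
  unfolding entrywise_norm_def by (auto intro!: sum_nonneg)

lemma norm_cscalar_prod_mult_vec_le:
  assumes A: "A \<in> carrier_mat p q" and x: "x \<in> carrier_vec q" and y: "y \<in> carrier_vec p"
  shows "cmod ((A *\<^sub>v x) \<bullet>c y) \<le> entrywise_norm A * sqrt (sqnorm x) * sqrt (sqnorm y)"
proof -
  have "(A *\<^sub>v x) \<bullet>c y = (\<Sum>i<p. \<Sum>j<q. A $$ (i, j) * x $ j * cnj (y $ i))"
    using A x y by (auto simp: scalar_prod_def lessThan_atLeast0 sum_distrib_right)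
  hence "cmod ((A *\<^sub>v x) \<bullet>c y) \<le> (\<Sum>i<p. cmod (\<Sum>j<q. A $$ (i, j) * x $ j * cnj (y $ i)))"
    by (simp add: norm_sum)
  also have "\<dots> \<le> (\<Sum>i<p. \<Sum>j<q. cmod (A $$ (i, j) * x $ j * cnj (y $ i)))"
    by (intro sum_mono norm_sum)
  also have "\<dots> \<le> (\<Sum>i<p. \<Sum>j<q. cmod (A $$ (i, j)) * (sqrt (sqnorm x) * sqrt (sqnorm y)))"
  proof (intro sum_mono)
    fix i j assume "i \<in> {..<p}" "j \<in> {..<q}"
    hence "cmod (x $ j) * cmod (y $ i) \<le> sqrt (sqnorm x) * sqrt (sqnorm y)"
      using x y norm_index_le_sqrt_sqnorm[of j x] norm_index_le_sqrt_sqnorm[of i y] sqnorm_nonneg[of x]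
      by (intro mult_mono) auto
    thus "cmod (A $$ (i, j) * x $ j * cnj (y $ i)) \<le> cmod (A $$ (i, j)) * (sqrt (sqnorm x) * sqrt (sqnorm y))"
      by (simp add: norm_mult mult.assoc mult_left_mono)
  qed
  also have "\<dots> = entrywise_norm A * sqrt (sqnorm x) * sqrt (sqnorm y)"
    using A by (simp add: entrywise_norm_def sum_distrib_right mult.assoc)
  finally show ?thesis .
qed

lemma rayleigh_le_entrywise_norm:
  assumes H: "H \<in> carrier_mat p p" and y: "y \<in> carrier_vec p"
  shows "Re ((H *\<^sub>v y) \<bullet>c y) \<le> entrywise_norm H * sqnorm y"
  using complex_Re_le_cmod[of "(H *\<^sub>v y) \<bullet>c y"] norm_cscalar_prod_mult_vec_le[OF H y y] sqnorm_nonneg[of y]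
  by (simp add: mult.assoc)

lemma sqnorm_mult_vec_le:
  assumes B: "B \<in> carrier_mat p q" and w: "w \<in> carrier_vec q"
  shows "sqnorm (B *\<^sub>v w) \<le> (entrywise_norm B)\<^sup>2 * sqnorm w"
proof -
  define s where "s = sqrt (sqnorm (B *\<^sub>v w))"
  have s: "s \<ge> 0" "s\<^sup>2 = sqnorm (B *\<^sub>v w)" unfolding s_def using sqnorm_nonneg by auto
  have "s\<^sup>2 \<le> cmod ((B *\<^sub>v w) \<bullet>c (B *\<^sub>v w))"
    unfolding s(2) sqnorm_def by (rule complex_Re_le_cmod)
  also have "\<dots> \<le> entrywise_norm B * sqrt (sqnorm w) * s"
    unfolding s_def using B w by (intro norm_cscalar_prod_mult_vec_le) auto
  finally have "s \<le> entrywise_norm B * sqrt (sqnorm w)"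
    using s(1) entrywise_norm_nonneg[of B] sqnorm_nonneg[of w] by (cases "s = 0") (auto simp: power2_eq_square)
  hence "s\<^sup>2 \<le> (entrywise_norm B * sqrt (sqnorm w))\<^sup>2"
    using s(1) by (rule power_mono)
  thus ?thesis using s(2) sqnorm_nonneg[of w] by (simp add: power_mult_distrib)
qed

definition hermitian_mat :: "complex mat \<Rightarrow> bool" where
  "hermitian_mat A \<longleftrightarrow> mat_adjoint A = A"

lemma hermitian_cscalar_prod:
  "A \<in> carrier_mat p p \<Longrightarrow> hermitian_mat A \<Longrightarrow> x \<in> carrier_vec p \<Longrightarrow> y \<in> carrier_vec p \<Longrightarrow>
    (A *\<^sub>v x) \<bullet>c y = x \<bullet>c (A *\<^sub>v y)"
  using cscalar_prod_mat_adjoint[of A p p x y] unfolding hermitian_mat_def by simp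

lemma psd_sqnorm_mult_vec_le:
  assumes A: "A \<in> carrier_mat p p" and herm: "hermitian_mat A"
    and psd: "\<And>z. z \<in> carrier_vec p \<Longrightarrow> 0 \<le> Re ((A *\<^sub>v z) \<bullet>c z)"
    and c: "c > 0" and bound: "\<And>w. w \<in> carrier_vec p \<Longrightarrow> Re ((A *\<^sub>v w) \<bullet>c w) \<le> c * sqnorm w"
    and y: "y \<in> carrier_vec p"
  shows "sqnorm (A *\<^sub>v y) \<le> c * Re ((A *\<^sub>v y) \<bullet>c y)"
proof -
  \<comment> \<open>evaluate the nonnegative form at z = y - A y / c\<close>
  define w where "w = A *\<^sub>v y"
  define t where "t = 1 / c"
  have w: "w \<in> carrier_vec p" and Aw: "A *\<^sub>v w \<in> carrier_vec p" using A y unfolding w_def by auto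
  define z where "z = y - of_real t \<cdot>\<^sub>v w"
  have z: "z \<in> carrier_vec p" using y w unfolding z_def by auto
  have Az: "A *\<^sub>v z = w - of_real t \<cdot>\<^sub>v (A *\<^sub>v w)"
    unfolding z_def using mult_minus_distrib_mat_vec[OF A y, of "of_real t \<cdot>\<^sub>v w"] w mult_mat_vec[OF A w]
    by (simp add: w_def)
  have tw: "of_real t \<cdot>\<^sub>v w \<in> carrier_vec p" "of_real t \<cdot>\<^sub>v (A *\<^sub>v w) \<in> carrier_vec p"
    using w Aw by auto
  have Awy: "(A *\<^sub>v w) \<bullet>c y = w \<bullet>c w"
    using hermitian_cscalar_prod[OF A herm w y] unfolding w_def .
  have "(A *\<^sub>v z) \<bullet>c z = w \<bullet>c (y - of_real t \<cdot>\<^sub>v w) - (of_real t \<cdot>\<^sub>v (A *\<^sub>v w)) \<bullet>c (y - of_real t \<cdot>\<^sub>v w)"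
    unfolding Az unfolding z_def using y tw w by (intro cscalar_prod_diff_left[of _ p]) auto
  also have "\<dots> = w \<bullet>c y - of_real t * (w \<bullet>c w)
      - (of_real t * ((A *\<^sub>v w) \<bullet>c y) - of_real t * (of_real t * ((A *\<^sub>v w) \<bullet>c w)))"
    using y tw w Aw
    by (simp add: cscalar_prod_diff_right[of _ p] cscalar_prod_smult_left[of _ p] cscalar_prod_smult_right[of _ p])
  finally have "(A *\<^sub>v z) \<bullet>c z = w \<bullet>c y - 2 * of_real t * (w \<bullet>c w) + of_real t * of_real t * ((A *\<^sub>v w) \<bullet>c w)"
    unfolding Awy by (simp add: algebra_simps)
  hence "0 \<le> Re (w \<bullet>c y) - 2 * t * sqnorm w + t * t * Re ((A *\<^sub>v w) \<bullet>c w)"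
    using psd[OF z] by (simp add: sqnorm_def)
  moreover have "t * t * Re ((A *\<^sub>v w) \<bullet>c w) \<le> t * t * (c * sqnorm w)"
    using bound[OF w] by (intro mult_left_mono) auto
  moreover have "t * t * (c * sqnorm w) = t * sqnorm w"
    unfolding t_def using c by (simp add: field_simps)
  ultimately have "t * sqnorm w \<le> Re (w \<bullet>c y)" by simp
  hence "c * (t * sqnorm w) \<le> c * Re (w \<bullet>c y)" using c by (intro mult_left_mono) auto
  thus ?thesis unfolding t_def w_def using c by simp
qed

lemma hermitian_psd_invertible_coercive:
  assumes A: "A \<in> carrier_mat p p" and herm: "hermitian_mat A"
    and psd: "\<And>z. z \<in> carrier_vec p \<Longrightarrow> 0 \<le> Re ((A *\<^sub>v z) \<bullet>c z)" and det: "det A \<noteq> 0"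
  obtains K where "K > 0" "\<And>y :: complex vec. y \<in> carrier_vec p \<Longrightarrow> sqnorm y \<le> K * Re ((A *\<^sub>v y) \<bullet>c y)"
proof -
  obtain B where B: "B \<in> carrier_mat p p" and BA: "B * A = 1\<^sub>m p"
    using det_non_zero_imp_unit[OF A det] unfolding Units_def ring_mat_def by auto
  define c where "c = entrywise_norm A + 1"
  have c: "c > 0" using entrywise_norm_nonneg[of A] unfolding c_def by simp
  have bound: "Re ((A *\<^sub>v w) \<bullet>c w) \<le> c * sqnorm w" if "w \<in> carrier_vec p" for w
    using rayleigh_le_entrywise_norm[OF A that] sqnorm_nonneg[of w] unfolding c_def
    by (simp add: distrib_right)
  define K where "K = (entrywise_norm B)\<^sup>2 * c + 1"
  show thesis
  proof (rule that)
    show "K > 0" unfolding K_def using c by (simp add: add_nonneg_pos)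
    fix y :: "complex vec" assume y: "y \<in> carrier_vec p"
    have "y = B *\<^sub>v (A *\<^sub>v y)"
      using assoc_mult_mat_vec[OF B A y] BA y by simp
    hence "sqnorm y \<le> (entrywise_norm B)\<^sup>2 * sqnorm (A *\<^sub>v y)"
      using sqnorm_mult_vec_le[OF B, of "A *\<^sub>v y"] A y by simp
    also have "\<dots> \<le> (entrywise_norm B)\<^sup>2 * (c * Re ((A *\<^sub>v y) \<bullet>c y))"
      using psd_sqnorm_mult_vec_le[OF A herm psd c bound y] by (intro mult_left_mono) auto
    also have "\<dots> \<le> K * Re ((A *\<^sub>v y) \<bullet>c y)"
      unfolding K_def using psd[OF y] by (simp add: distrib_right)
    finally show "sqnorm y \<le> K * Re ((A *\<^sub>v y) \<bullet>c y)" .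
  qed
qed

lemma rayleigh_le_of_unit_bound:
  assumes H: "H \<in> carrier_mat p p"
    and unit: "\<And>u. u \<in> carrier_vec p \<Longrightarrow> sqnorm u = 1 \<Longrightarrow> Re ((H *\<^sub>v u) \<bullet>c u) \<le> c"
    and y: "y \<in> carrier_vec p"
  shows "Re ((H *\<^sub>v y) \<bullet>c y) \<le> c * sqnorm y"
proof (cases "y = 0\<^sub>v p")
  case True
  thus ?thesis using H by simp
next
  case False
  define a where "a = 1 / sqrt (sqnorm y)"
  have pos: "sqnorm y > 0" using sqnorm_pos[OF y False] .
  have a2: "a\<^sup>2 * sqnorm y = 1" unfolding a_def using pos by (simp add: power_divide)
  define u where "u = of_real a \<cdot>\<^sub>v y"
  have u: "u \<in> carrier_vec p" using y unfolding u_def by simp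
  have "sqnorm u = 1" unfolding u_def sqnorm_smult[OF y] using a2 by simp
  hence "Re ((H *\<^sub>v u) \<bullet>c u) \<le> c" by (rule unit[OF u])
  moreover have "(H *\<^sub>v u) \<bullet>c u = of_real (a\<^sup>2) * ((H *\<^sub>v y) \<bullet>c y)"
    unfolding u_def using H y
    by (simp add: mult_mat_vec cscalar_prod_smult_left[of _ p] cscalar_prod_smult_right[of _ p] power2_eq_square)
  ultimately have "a\<^sup>2 * Re ((H *\<^sub>v y) \<bullet>c y) \<le> c" by simp
  hence "a\<^sup>2 * Re ((H *\<^sub>v y) \<bullet>c y) * sqnorm y \<le> c * sqnorm y"
    using pos by (intro mult_right_mono) auto
  also have "a\<^sup>2 * Re ((H *\<^sub>v y) \<bullet>c y) * sqnorm y = Re ((H *\<^sub>v y) \<bullet>c y)"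
    using a2 by (simp add: algebra_simps)
  finally show ?thesis .
qed

lemma hermitian_shift:
  fixes H :: "complex mat" and lam :: real
  assumes H: "H \<in> carrier_mat p p" and herm: "hermitian_mat H"
  defines "A \<equiv> of_real lam \<cdot>\<^sub>m 1\<^sub>m p - H"
  shows "A \<in> carrier_mat p p" and "hermitian_mat A"
    and "\<And>y. y \<in> carrier_vec p \<Longrightarrow> A *\<^sub>v y = of_real lam \<cdot>\<^sub>v y - H *\<^sub>v y"
    and "\<And>y. y \<in> carrier_vec p \<Longrightarrow> Re ((A *\<^sub>v y) \<bullet>c y) = lam * sqnorm y - Re ((H *\<^sub>v y) \<bullet>c y)"
proof -
  show A: "A \<in> carrier_mat p p" unfolding A_def by (rule minus_carrier_mat[OF H])
  have "mat_adjoint A = of_real lam \<cdot>\<^sub>m 1\<^sub>m p - mat_adjoint H"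
    unfolding A_def using H by (intro eq_matI) auto
  thus "hermitian_mat A" using herm unfolding hermitian_mat_def A_def by simp
  show Av: "A *\<^sub>v y = of_real lam \<cdot>\<^sub>v y - H *\<^sub>v y" if "y \<in> carrier_vec p" for y
  proof -
    have "(of_real lam \<cdot>\<^sub>m 1\<^sub>m p) *\<^sub>v y = of_real lam \<cdot>\<^sub>v y" using that by auto
    thus ?thesis
      unfolding A_def using minus_mult_distrib_mat_vec[OF _ H that, of "of_real lam \<cdot>\<^sub>m 1\<^sub>m p"] by simp
  qed
  show "Re ((A *\<^sub>v y) \<bullet>c y) = lam * sqnorm y - Re ((H *\<^sub>v y) \<bullet>c y)" if y: "y \<in> carrier_vec p" for y
    unfolding Av[OF y] using H y
    by (simp add: cscalar_prod_diff_left[of _ p] cscalar_prod_smult_left[of _ p] sqnorm_def)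
qed

lemma hermitian_rayleigh_sup_eigenvector:
  assumes H: "H \<in> carrier_mat p p" and herm: "hermitian_mat H"
    and rayleigh: "\<And>y. y \<in> carrier_vec p \<Longrightarrow> Re ((H *\<^sub>v y) \<bullet>c y) \<le> lam * sqnorm y"
    and least: "\<And>b. (\<And>u. u \<in> carrier_vec p \<Longrightarrow> sqnorm u = 1 \<Longrightarrow> Re ((H *\<^sub>v u) \<bullet>c u) \<le> b) \<Longrightarrow> lam \<le> b"
  obtains v where "v \<in> carrier_vec p" "v \<noteq> 0\<^sub>v p" "H *\<^sub>v v = of_real lam \<cdot>\<^sub>v v"
proof -
  define A where "A = of_real lam \<cdot>\<^sub>m 1\<^sub>m p - H"
  note A = hermitian_shift[OF H herm, where lam = lam, folded A_def]
  have A_psd: "0 \<le> Re ((A *\<^sub>v z) \<bullet>c z)" if "z \<in> carrier_vec p" for z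
    using A(4)[OF that] rayleigh[OF that] by simp
  \<comment> \<open>if lam I - H were invertible it would be coercive, pushing the Rayleigh quotient below lam\<close>
  have "det A = 0"
  proof (rule ccontr)
    assume "det A \<noteq> 0"
    then obtain K where K: "K > 0"
      and coercive: "\<And>y. y \<in> carrier_vec p \<Longrightarrow> sqnorm y \<le> K * Re ((A *\<^sub>v y) \<bullet>c y)"
      using hermitian_psd_invertible_coercive[OF A(1,2) A_psd] by blast
    have "lam \<le> lam - 1 / K"
    proof (rule least)
      fix u assume u: "u \<in> carrier_vec p" "sqnorm u = 1"
      have "1 \<le> K * (lam - Re ((H *\<^sub>v u) \<bullet>c u))" using coercive[OF u(1)] A(4)[OF u(1)] u(2) by simp
      thus "Re ((H *\<^sub>v u) \<bullet>c u) \<le> lam - 1 / K" using K by (simp add: field_simps)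
    qed
    thus False using K by simp
  qed
  then obtain v where v: "v \<in> carrier_vec p" "v \<noteq> 0\<^sub>v p" "A *\<^sub>v v = 0\<^sub>v p"
    using det_0_iff_vec_prod_zero[OF A(1)] by auto
  have "H *\<^sub>v v = of_real lam \<cdot>\<^sub>v v"
  proof (rule eq_vecI)
    fix i assume "i < dim_vec (of_real lam \<cdot>\<^sub>v v)"
    hence i: "i < p" using v by simp
    have "(of_real lam \<cdot>\<^sub>v v - H *\<^sub>v v) $ i = 0" using v(3) A(3)[OF v(1)] i by simp
    thus "(H *\<^sub>v v) $ i = (of_real lam \<cdot>\<^sub>v v) $ i" using i v(1) H by simp
  qed (use H v in auto)
  with v show thesis by (intro that)
qed

lemma hermitian_max_eigenvector:
  assumes H: "H \<in> carrier_mat p p" and herm: "hermitian_mat H" and p: "p > 0"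
  obtains lam v where "v \<in> carrier_vec p" "v \<noteq> 0\<^sub>v p" "H *\<^sub>v v = of_real lam \<cdot>\<^sub>v v"
    "\<And>y. y \<in> carrier_vec p \<Longrightarrow> Re ((H *\<^sub>v y) \<bullet>c y) \<le> lam * sqnorm y"
proof -
  define S where "S = {Re ((H *\<^sub>v u) \<bullet>c u) | u. u \<in> carrier_vec p \<and> sqnorm u = 1}"
  have S_ne: "S \<noteq> {}"
    unfolding S_def using sqnorm_unit_vec[OF p] unit_vec_carrier[of p 0] by blast
  have S_bdd: "bdd_above S"
    unfolding S_def bdd_above_def using rayleigh_le_entrywise_norm[OF H] by force
  have rayleigh: "Re ((H *\<^sub>v y) \<bullet>c y) \<le> Sup S * sqnorm y" if "y \<in> carrier_vec p" for y
    using rayleigh_le_of_unit_bound[OF H _ that] cSup_upper[OF _ S_bdd] unfolding S_def by blast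
  have "Sup S \<le> b"
    if "\<And>u. u \<in> carrier_vec p \<Longrightarrow> sqnorm u = 1 \<Longrightarrow> Re ((H *\<^sub>v u) \<bullet>c u) \<le> b" for b
    using that by (intro cSup_least[OF S_ne]) (auto simp: S_def)
  then obtain v where "v \<in> carrier_vec p" "v \<noteq> 0\<^sub>v p" "H *\<^sub>v v = of_real (Sup S) \<cdot>\<^sub>v v"
    using hermitian_rayleigh_sup_eigenvector[OF H herm rayleigh] by blast
  with rayleigh show thesis by (intro that)
qed

lemma eigenvalues_Re_finite_nonempty:
  assumes "(G :: complex mat) \<in> carrier_mat q q" "q > 0"
  shows "finite {Re e | e. eigenvalue G e}" "{Re e | e. eigenvalue G e} \<noteq> {}"
proof -
  have "{Re e | e. eigenvalue G e} = Re ` spectrum G" unfolding spectrum_def by auto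
  thus "finite {Re e | e. eigenvalue G e}" "{Re e | e. eigenvalue G e} \<noteq> {}"
    using card_finite_spectrum(1)[OF assms(1)] spectrum_non_empty[OF assms] by auto
qed

lemma eigenvalue_adjoint_mult_le:
  assumes C: "C \<in> carrier_mat p q" and mu: "\<mu> \<ge> 0"
    and bound: "\<And>y. y \<in> carrier_vec p \<Longrightarrow> sqnorm (mat_adjoint C *\<^sub>v y) \<le> \<mu> * sqnorm y"
    and ev: "eigenvalue (mat_adjoint C * C) e"
  shows "Re e \<le> \<mu>"
proof -
  obtain v where v: "v \<in> carrier_vec q" "v \<noteq> 0\<^sub>v q" and Gv: "(mat_adjoint C * C) *\<^sub>v v = e \<cdot>\<^sub>v v"
    using ev C unfolding eigenvalue_def eigenvector_def by auto
  define w where "w = C *\<^sub>v v"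
  have w: "w \<in> carrier_vec p" using C v unfolding w_def by simp
  have Aw: "mat_adjoint C *\<^sub>v w = e \<cdot>\<^sub>v v"
    using Gv assoc_mult_mat_vec[OF mat_adjoint_carrier[OF C] C v(1)] unfolding w_def by simp
  show ?thesis
  proof (cases "w = 0\<^sub>v p")
    case True
    hence "e \<cdot>\<^sub>v v = 0\<^sub>v q" using Aw mult_mat_vec_zero[OF mat_adjoint_carrier[OF C]] by simp
    hence "(cmod e)\<^sup>2 * sqnorm v = 0" using sqnorm_smult[OF v(1), of e] by simp
    thus ?thesis using sqnorm_pos[OF v] mu by simp
  next
    case False
    \<comment> \<open>w is an eigenvector of C C^H with the same eigenvalue\<close>
    have CAw: "C *\<^sub>v (mat_adjoint C *\<^sub>v w) = e \<cdot>\<^sub>v w"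
      unfolding Aw unfolding w_def by (rule mult_mat_vec[OF C v(1)])
    have "(C *\<^sub>v (mat_adjoint C *\<^sub>v w)) \<bullet>c w = (mat_adjoint C *\<^sub>v w) \<bullet>c (mat_adjoint C *\<^sub>v w)"
      using C w by (intro cscalar_prod_mat_adjoint mat_adjoint_mult_vec_carrier)
    hence "e * of_real (sqnorm w) = of_real (sqnorm (mat_adjoint C *\<^sub>v w))"
      unfolding CAw cscalar_prod_smult_left[OF w w] cscalar_prod_self .
    hence "Re (e * of_real (sqnorm w)) = sqnorm (mat_adjoint C *\<^sub>v w)"
      by (metis Re_complex_of_real)
    hence "Re e * sqnorm w = sqnorm (mat_adjoint C *\<^sub>v w)" by simp
    also have "\<dots> \<le> \<mu> * sqnorm w" by (rule bound[OF w])
    finally show ?thesis using sqnorm_pos[OF w False] by simp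
  qed
qed

lemma sigma_max_le:
  assumes C: "C \<in> carrier_mat p q" and q: "q > 0" and mu: "\<mu> \<ge> 0"
    and bound: "\<And>y. y \<in> carrier_vec p \<Longrightarrow> sqnorm (mat_adjoint C *\<^sub>v y) \<le> \<mu> * sqnorm y"
  shows "sigma_max C \<le> sqrt \<mu>"
proof -
  note fin = eigenvalues_Re_finite_nonempty[OF mult_carrier_mat[OF mat_adjoint_carrier[OF C] C] q]
  have "Max {Re e | e. eigenvalue (mat_adjoint C * C) e} \<le> \<mu>"
    using fin eigenvalue_adjoint_mult_le[OF C mu bound] by (subst Max_le_iff) auto
  thus ?thesis unfolding sigma_max_def by simp
qed

lemma sigma_max_eqI:
  assumes C: "C \<in> carrier_mat p q" and q: "q > 0" and mu: "\<mu> \<ge> 0"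
    and bound: "\<And>y. y \<in> carrier_vec p \<Longrightarrow> sqnorm (mat_adjoint C *\<^sub>v y) \<le> \<mu> * sqnorm y"
    and y0: "y0 \<in> carrier_vec p" "y0 \<noteq> 0\<^sub>v p"
    and attained: "C *\<^sub>v (mat_adjoint C *\<^sub>v y0) = of_real \<mu> \<cdot>\<^sub>v y0"
  shows "sigma_max C = sqrt \<mu>"
proof -
  let ?G = "mat_adjoint C * C"
  have G: "?G \<in> carrier_mat q q" using mult_carrier_mat[OF mat_adjoint_carrier[OF C] C] .
  note fin = eigenvalues_Re_finite_nonempty[OF G q]
  have "eigenvalue ?G (of_real \<mu>)"
  proof (cases "\<mu> = 0")
    case True
    \<comment> \<open>then C^H = 0, so every nonzero vector is an eigenvector\<close>
    have "mat_adjoint C *\<^sub>v y = 0\<^sub>v q" if y: "y \<in> carrier_vec p" for y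
    proof -
      have "mat_adjoint C *\<^sub>v y \<in> carrier_vec q" by (rule mat_adjoint_mult_vec_carrier[OF C y])
      thus ?thesis using bound[OF y] True sqnorm_nonneg[of "mat_adjoint C *\<^sub>v y"] sqnorm_eq_0_iff by force
    qed
    hence "?G *\<^sub>v unit_vec q 0 = 0\<^sub>v q"
      using C assoc_mult_mat_vec[OF mat_adjoint_carrier[OF C] C unit_vec_carrier] by simp
    thus ?thesis unfolding eigenvalue_def eigenvector_def using True G unit_vec_nonzero[OF q]
      by (intro exI[of _ "unit_vec q 0"]) auto
  next
    case False
    define v where "v = mat_adjoint C *\<^sub>v y0"
    have v: "v \<in> carrier_vec q" unfolding v_def by (rule mat_adjoint_mult_vec_carrier[OF C y0(1)])
    have Gv: "?G *\<^sub>v v = of_real \<mu> \<cdot>\<^sub>v v"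
      using assoc_mult_mat_vec[OF mat_adjoint_carrier[OF C] C v] mult_mat_vec[OF mat_adjoint_carrier[OF C] y0(1)]
      unfolding v_def attained by simp
    have "v \<bullet>c v = y0 \<bullet>c (C *\<^sub>v v)"
      using cscalar_prod_mat_adjoint[OF mat_adjoint_carrier[OF C] y0(1) v] unfolding v_def by simp
    also have "\<dots> = of_real \<mu> * (y0 \<bullet>c y0)"
      unfolding v_def attained using cscalar_prod_smult_right[OF y0(1) y0(1)] by simp
    finally have "sqnorm v = \<mu> * sqnorm y0"
      unfolding cscalar_prod_self by (metis of_real_eq_iff of_real_mult)
    hence "v \<noteq> 0\<^sub>v q" using sqnorm_pos[OF y0] False mu by auto
    thus ?thesis unfolding eigenvalue_def eigenvector_def using Gv v C by auto
  qed
  hence "\<mu> \<in> {Re e | e. eigenvalue ?G e}" by force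
  hence "Max {Re e | e. eigenvalue ?G e} = \<mu>"
    using fin eigenvalue_adjoint_mult_le[OF C mu bound] by (intro Max_eqI) auto
  thus ?thesis unfolding sigma_max_def by simp
qed

lemma hermitian_psd_sqnorm_mult_vec_le:
  assumes H: "H \<in> carrier_mat p p" and herm: "hermitian_mat H"
    and psd: "\<And>z. z \<in> carrier_vec p \<Longrightarrow> 0 \<le> Re ((H *\<^sub>v z) \<bullet>c z)"
    and lam: "lam \<ge> 0" and rayleigh: "\<And>y. y \<in> carrier_vec p \<Longrightarrow> Re ((H *\<^sub>v y) \<bullet>c y) \<le> lam * sqnorm y"
    and y: "y \<in> carrier_vec p"
  shows "sqnorm (H *\<^sub>v y) \<le> lam\<^sup>2 * sqnorm y"
proof (cases "lam = 0")
  case True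
  have one_bound: "Re ((H *\<^sub>v w) \<bullet>c w) \<le> (1 :: real) * sqnorm w" if "w \<in> carrier_vec p" for w
    using rayleigh[OF that] True sqnorm_nonneg[of w] by simp
  have "sqnorm (H *\<^sub>v y) \<le> (1 :: real) * Re ((H *\<^sub>v y) \<bullet>c y)"
    using psd_sqnorm_mult_vec_le[where c = 1, OF H herm psd _ one_bound y] by simp
  also have "\<dots> \<le> 0" using rayleigh[OF y] True by simp
  finally show ?thesis using True by simp
next
  case False
  hence pos: "lam > 0" using lam by simp
  have "sqnorm (H *\<^sub>v y) \<le> lam * Re ((H *\<^sub>v y) \<bullet>c y)"
    by (rule psd_sqnorm_mult_vec_le[OF H herm psd pos rayleigh y])
  also have "\<dots> \<le> lam * (lam * sqnorm y)" using rayleigh[OF y] pos by (intro mult_left_mono) auto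
  finally show ?thesis by (simp add: power2_eq_square mult.assoc)
qed

lemma sigma_max_real_symmetric_psd:
  assumes X: "X \<in> carrier_mat p p" and sym: "X\<^sup>T = X" and p: "p > 0"
    and psd: "\<And>y. y \<in> carrier_vec p \<Longrightarrow> 0 \<le> Re ((cmat X *\<^sub>v y) \<bullet>c y)"
  shows "\<And>y. y \<in> carrier_vec p \<Longrightarrow> Re ((cmat X *\<^sub>v y) \<bullet>c y) \<le> sigma_max_real X * sqnorm y"
    and "\<exists>v. v \<in> carrier_vec p \<and> v \<noteq> 0\<^sub>v p \<and> cmat X *\<^sub>v v = of_real (sigma_max_real X) \<cdot>\<^sub>v v"
proof -
  define H where "H = cmat X"
  have H: "H \<in> carrier_mat p p" unfolding H_def using X by simp
  have adj: "mat_adjoint H = H" unfolding H_def mat_adjoint_cmat sym ..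
  hence herm: "hermitian_mat H" unfolding hermitian_mat_def .
  obtain lam v where v: "v \<in> carrier_vec p" "v \<noteq> 0\<^sub>v p" and Hv: "H *\<^sub>v v = of_real lam \<cdot>\<^sub>v v"
    and rayleigh: "\<And>y. y \<in> carrier_vec p \<Longrightarrow> Re ((H *\<^sub>v y) \<bullet>c y) \<le> lam * sqnorm y"
    using hermitian_max_eigenvector[OF H herm p] by blast
  have "Re ((H *\<^sub>v v) \<bullet>c v) = lam * sqnorm v"
    unfolding Hv cscalar_prod_smult_left[OF v(1) v(1)] by (simp add: sqnorm_def)
  hence lam: "lam \<ge> 0"
    using psd[OF v(1)] sqnorm_pos[OF v(1,2)] unfolding H_def by (simp add: zero_le_mult_iff)
  have psdH: "0 \<le> Re ((H *\<^sub>v z) \<bullet>c z)" if "z \<in> carrier_vec p" for z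
    using psd[OF that] unfolding H_def .
  have bound: "sqnorm (mat_adjoint H *\<^sub>v y) \<le> lam\<^sup>2 * sqnorm y" if "y \<in> carrier_vec p" for y
    unfolding adj by (rule hermitian_psd_sqnorm_mult_vec_le[OF H herm psdH lam rayleigh that])
  have attained: "H *\<^sub>v (mat_adjoint H *\<^sub>v v) = of_real (lam\<^sup>2) \<cdot>\<^sub>v v"
    unfolding adj Hv using H v by (simp add: mult_mat_vec Hv power2_eq_square smult_smult_assoc)
  have "sigma_max H = sqrt (lam\<^sup>2)"
    by (rule sigma_max_eqI[OF H p _ bound v attained]) simp
  hence sm: "sigma_max_real X = lam" unfolding sigma_max_real_def H_def cmat_def using lam by simp
  show "\<And>y. y \<in> carrier_vec p \<Longrightarrow> Re ((cmat X *\<^sub>v y) \<bullet>c y) \<le> sigma_max_real X * sqnorm y"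
    using rayleigh unfolding sm H_def .
  show "\<exists>v. v \<in> carrier_vec p \<and> v \<noteq> 0\<^sub>v p \<and> cmat X *\<^sub>v v = of_real (sigma_max_real X) \<cdot>\<^sub>v v"
    using v Hv unfolding sm H_def by blast
qed

section \<open>The frequency response of the reduced network\<close>

text \<open>R, L and B stand for R, L_{e,s}^tau and the input matrix of Sigma_tilde_tau. For W = rho I the
  state matrix L R W R^T is rho L M with M = R R^T, and the input matrix enters only through its
  Gram matrix B B^T.\<close>

locale network_transfer =
  fixes R L B :: "real mat" and k m q :: nat and \<rho> \<sigma>w \<sigma>v :: real
  assumes R: "R \<in> carrier_mat k m" and L: "L \<in> carrier_mat k k" and B: "B \<in> carrier_mat k q"
    and L_sym: "L\<^sup>T = L"
    and L_pos_def: "\<And>x. x \<in> carrier_vec k \<Longrightarrow> x \<noteq> 0\<^sub>v k \<Longrightarrow> 0 < Re (x \<bullet>c (cmat L *\<^sub>v x))"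
    and R_transpose_inj: "\<And>x. x \<in> carrier_vec k \<Longrightarrow> cmat R\<^sup>T *\<^sub>v x = 0\<^sub>v m \<Longrightarrow> x = 0\<^sub>v k"
    and B_gram: "B * B\<^sup>T = \<sigma>w\<^sup>2 \<cdot>\<^sub>m L + (\<sigma>v\<^sup>2 * \<rho>) \<cdot>\<^sub>m (L * (R * R\<^sup>T) * L)"
    and rho_pos: "\<rho> > 0" and k_pos: "k > 0" and q_pos: "q > 0"
begin

abbreviation "M \<equiv> R * R\<^sup>T"
abbreviation "N \<equiv> R * R\<^sup>T * L * R * R\<^sup>T"
abbreviation "X \<equiv> R\<^sup>T * minv N * R"
abbreviation "\<kappa> \<equiv> sigma_max_real X"
abbreviation "peak \<equiv> 1 / \<rho>\<^sup>2 * \<sigma>w\<^sup>2 * \<kappa> + 1 / \<rho> * \<sigma>v\<^sup>2"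
abbreviation "resolvent s \<equiv> s \<cdot>\<^sub>m 1\<^sub>m k + cmat (\<rho> \<cdot>\<^sub>m (L * M))"
abbreviation "transfer s \<equiv> cmat R\<^sup>T * minv (resolvent s) * cmat B"

lemma Rt: "R\<^sup>T \<in> carrier_mat m k" using R by simp
lemma Bt: "B\<^sup>T \<in> carrier_mat q k" using B by simp
lemma M: "M \<in> carrier_mat k k" using R by simp
lemma M_sym: "M\<^sup>T = M" using transpose_mult[OF R Rt] by simp

lemma N_eq: "N = M * L * M"
  by (rule assoc_mult_mat[OF mult_carrier_mat[OF M L] R Rt])

lemma N: "N \<in> carrier_mat k k" unfolding N_eq using M L by simp

lemma N_sym: "N\<^sup>T = N"
  unfolding N_eq using transpose_mult[OF mult_carrier_mat[OF M L] M] transpose_mult[OF M L] M_sym L_sym M L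
  by (simp add: assoc_mult_mat[of _ k k _ k _ k])

lemma cmat_mult_vec_carriers [simp]:
  "x \<in> carrier_vec k \<Longrightarrow> cmat L *\<^sub>v x \<in> carrier_vec k"
  "x \<in> carrier_vec k \<Longrightarrow> cmat M *\<^sub>v x \<in> carrier_vec k"
  "x \<in> carrier_vec k \<Longrightarrow> cmat R\<^sup>T *\<^sub>v x \<in> carrier_vec m"
  "x \<in> carrier_vec k \<Longrightarrow> cmat B\<^sup>T *\<^sub>v x \<in> carrier_vec q"
  "y \<in> carrier_vec m \<Longrightarrow> cmat R *\<^sub>v y \<in> carrier_vec k"
  "w \<in> carrier_vec q \<Longrightarrow> cmat B *\<^sub>v w \<in> carrier_vec k"
  using R B L M by (auto intro!: cmat_mult_vec_carrier)

lemma cscalar_prod_M: "x \<in> carrier_vec k \<Longrightarrow> x \<bullet>c (cmat M *\<^sub>v x) = of_real (sqnorm (cmat R\<^sup>T *\<^sub>v x))"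
  using cscalar_prod_cmat_transpose[OF Rt, of x "cmat R\<^sup>T *\<^sub>v x"] cmat_mult_mat_vec[OF R Rt, of x]
  by (simp add: cscalar_prod_self)

lemma M_inj: "x \<in> carrier_vec k \<Longrightarrow> cmat M *\<^sub>v x = 0\<^sub>v k \<Longrightarrow> x = 0\<^sub>v k"
  using cscalar_prod_M[of x] sqnorm_eq_0_iff[of "cmat R\<^sup>T *\<^sub>v x" m] R_transpose_inj[of x]
  by simp

lemma L_inj: "x \<in> carrier_vec k \<Longrightarrow> cmat L *\<^sub>v x = 0\<^sub>v k \<Longrightarrow> x = 0\<^sub>v k"
  using L_pos_def[of x] by (force simp: scalar_prod_def)

lemma N_inj: "x \<in> carrier_vec k \<Longrightarrow> cmat N *\<^sub>v x = 0\<^sub>v k \<Longrightarrow> x = 0\<^sub>v k"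
  using cmat_mult_mat_vec[OF mult_carrier_mat[OF M L] M, of x] cmat_mult_mat_vec[OF M L, of "cmat M *\<^sub>v x"]
  by (simp add: N_eq) (metis M_inj L_inj cmat_mult_vec_carriers(1,2))

lemma det_M: "det M \<noteq> 0" by (rule det_nonzero_if_cmat_injective[OF M M_inj])
lemma det_N: "det N \<noteq> 0" by (rule det_nonzero_if_cmat_injective[OF N N_inj])

lemmas Minv = minv_inverse[OF M det_M] and Ninv = minv_inverse[OF N det_N]

lemma cmat_inverse_mult_vec_carriers [simp]:
  "x \<in> carrier_vec k \<Longrightarrow> cmat (minv M) *\<^sub>v x \<in> carrier_vec k"
  "x \<in> carrier_vec k \<Longrightarrow> cmat (minv N) *\<^sub>v x \<in> carrier_vec k"
  using Minv(1) Ninv(1) by (auto intro!: cmat_mult_vec_carrier)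

lemma cmat_mult_vec_linear [simp]:
  fixes x y :: "complex vec"
  assumes "x \<in> carrier_vec k" "y \<in> carrier_vec k"
  shows "cmat L *\<^sub>v (c \<cdot>\<^sub>v x) = c \<cdot>\<^sub>v (cmat L *\<^sub>v x)" "cmat M *\<^sub>v (c \<cdot>\<^sub>v x) = c \<cdot>\<^sub>v (cmat M *\<^sub>v x)"
    "cmat (minv M) *\<^sub>v (c \<cdot>\<^sub>v x) = c \<cdot>\<^sub>v (cmat (minv M) *\<^sub>v x)"
    "cmat (minv N) *\<^sub>v (c \<cdot>\<^sub>v x) = c \<cdot>\<^sub>v (cmat (minv N) *\<^sub>v x)"
    "cmat R\<^sup>T *\<^sub>v (c \<cdot>\<^sub>v x) = c \<cdot>\<^sub>v (cmat R\<^sup>T *\<^sub>v x)"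
    "cmat L *\<^sub>v (x + y) = cmat L *\<^sub>v x + cmat L *\<^sub>v y" "cmat M *\<^sub>v (x + y) = cmat M *\<^sub>v x + cmat M *\<^sub>v y"
    "cmat R\<^sup>T *\<^sub>v (x + y) = cmat R\<^sup>T *\<^sub>v x + cmat R\<^sup>T *\<^sub>v y"
  using mult_mat_vec[OF cmat_carrier[OF L] assms(1)] mult_mat_vec[OF cmat_carrier[OF M] assms(1)]
    mult_mat_vec[OF cmat_carrier[OF Minv(1)] assms(1)] mult_mat_vec[OF cmat_carrier[OF Ninv(1)] assms(1)]
    mult_mat_vec[OF cmat_carrier[OF Rt] assms(1)] mult_add_distrib_mat_vec[OF cmat_carrier[OF L] assms]
    mult_add_distrib_mat_vec[OF cmat_carrier[OF M] assms] mult_add_distrib_mat_vec[OF cmat_carrier[OF Rt] assms]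
  by blast+

lemma cmat_R_mult_vec_smult [simp]:
  "y \<in> carrier_vec m \<Longrightarrow> cmat R *\<^sub>v (c \<cdot>\<^sub>v y) = c \<cdot>\<^sub>v (cmat R *\<^sub>v y)"
  by (rule mult_mat_vec[OF cmat_carrier[OF R]])

lemma Minv_sym: "(minv M)\<^sup>T = minv M" by (rule minv_symmetric[OF M det_M M_sym])
lemma Ninv_sym: "(minv N)\<^sup>T = minv N" by (rule minv_symmetric[OF N det_N N_sym])

lemma m_pos: "m > 0"
proof (rule ccontr)
  assume "\<not> m > 0"
  hence "cmat R\<^sup>T *\<^sub>v unit_vec k 0 = 0\<^sub>v m" by (intro eq_vecI) (use R in auto)
  thus False using R_transpose_inj[OF unit_vec_carrier] unit_vec_nonzero[OF k_pos] by blast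
qed

lemma Ninv_M_L: "minv N * M * L = minv M"
proof -
  have "minv N * M * L = minv N * M * L * (M * minv M)" using Minv Ninv M L by simp
  also have "\<dots> = (minv N * (M * L * M)) * minv M" using Minv(1) Ninv(1) M L
    by (simp add: assoc_mult_mat[of _ k k _ k _ k])
  also have "\<dots> = minv M" using Ninv Minv unfolding N_eq by simp
  finally show ?thesis .
qed

lemma L_M_Ninv: "L * M * minv N = minv M"
proof -
  have "L * M * minv N = (minv M * M) * (L * M * minv N)" using Minv Ninv M L by simp
  also have "\<dots> = minv M * (M * L * M * minv N)" using Minv(1) Ninv(1) M L
    by (simp add: assoc_mult_mat[of _ k k _ k _ k])
  also have "\<dots> = minv M" using Ninv Minv unfolding N_eq by simp
  finally show ?thesis .
qed

lemma X: "X \<in> carrier_mat m m" using R Ninv by simp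

lemma X_sym: "X\<^sup>T = X"
  using transpose_mult[OF mult_carrier_mat[OF Rt Ninv(1)] R] transpose_mult[OF Rt Ninv(1)] Ninv_sym R Ninv
  by (simp add: assoc_mult_mat[of _ m k _ k _ m])

lemma X_mult_vec: "y \<in> carrier_vec m \<Longrightarrow> cmat X *\<^sub>v y = cmat R\<^sup>T *\<^sub>v (cmat (minv N) *\<^sub>v (cmat R *\<^sub>v y))"
  using cmat_mult_mat_vec[OF mult_carrier_mat[OF Rt Ninv(1)] R] cmat_mult_mat_vec[OF Rt Ninv(1)] by simp

lemma X_psd: assumes y: "y \<in> carrier_vec m" shows "0 \<le> Re ((cmat X *\<^sub>v y) \<bullet>c y)"
proof -
  define u where "u = cmat (minv N) *\<^sub>v (cmat R *\<^sub>v y)"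
  have u: "u \<in> carrier_vec k" unfolding u_def using y by simp
  have "cmat R *\<^sub>v y = cmat N *\<^sub>v u"
    unfolding u_def using cmat_inverse_mult_vec[OF N Ninv(1,2)] y by simp
  also have "\<dots> = cmat M *\<^sub>v (cmat L *\<^sub>v (cmat M *\<^sub>v u))"
    unfolding N_eq using cmat_mult_mat_vec[OF mult_carrier_mat[OF M L] M u] cmat_mult_mat_vec[OF M L] u
    by simp
  finally have Ry: "cmat R *\<^sub>v y = \<dots>" .
  have "(cmat X *\<^sub>v y) \<bullet>c y = u \<bullet>c (cmat R *\<^sub>v y)"
    unfolding X_mult_vec[OF y] u_def[symmetric] using cscalar_prod_cmat_transpose[OF Rt u y] by simp
  also have "\<dots> = (cmat M *\<^sub>v u) \<bullet>c (cmat L *\<^sub>v (cmat M *\<^sub>v u))"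
    unfolding Ry using u by (simp add: cscalar_prod_cmat_symmetric[OF M M_sym])
  finally show ?thesis
    using L_pos_def[of "cmat M *\<^sub>v u"] u cscalar_prod_swap[of "cmat M *\<^sub>v u" k "cmat L *\<^sub>v (cmat M *\<^sub>v u)"]
    by (cases "cmat M *\<^sub>v u = 0\<^sub>v k") (auto simp: cscalar_prod_cmat_symmetric[OF L L_sym])
qed

lemma kappa_rayleigh: "y \<in> carrier_vec m \<Longrightarrow> Re ((cmat X *\<^sub>v y) \<bullet>c y) \<le> \<kappa> * sqnorm y"
  and kappa_eigenvector: "\<exists>v. v \<in> carrier_vec m \<and> v \<noteq> 0\<^sub>v m \<and> cmat X *\<^sub>v v = of_real \<kappa> \<cdot>\<^sub>v v"
  using sigma_max_real_symmetric_psd[OF X X_sym m_pos X_psd] by auto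

lemma L_form_le_kappa:
  assumes t: "t \<in> carrier_vec k"
  shows "Re (t \<bullet>c (cmat L *\<^sub>v t)) \<le> \<kappa> * Re ((cmat L *\<^sub>v t) \<bullet>c (cmat M *\<^sub>v (cmat L *\<^sub>v t)))"
proof -
  define u where "u = cmat L *\<^sub>v t"
  define y where "y = cmat R\<^sup>T *\<^sub>v u"
  have u: "u \<in> carrier_vec k" and y: "y \<in> carrier_vec m" using t unfolding u_def y_def by simp_all
  have Ry: "cmat R *\<^sub>v y = cmat M *\<^sub>v u"
    unfolding y_def by (rule cmat_mult_mat_vec[OF R Rt u, symmetric])
  \<comment> \<open>L^-1 = M N^-1 M, so the form of L at t is the form of X at R^T L t\<close>
  have "cmat (minv N) *\<^sub>v (cmat M *\<^sub>v u) = cmat (minv N * M * L) *\<^sub>v t"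
    unfolding u_def using cmat_mult_mat_vec[OF Ninv(1) M] cmat_mult_mat_vec[OF mult_carrier_mat[OF Ninv(1) M] L t] t
    by simp
  hence Xy: "cmat X *\<^sub>v y = cmat R\<^sup>T *\<^sub>v (cmat (minv M) *\<^sub>v t)"
    unfolding X_mult_vec[OF y] Ry Ninv_M_L by simp
  have "(cmat X *\<^sub>v y) \<bullet>c y = (cmat (minv M) *\<^sub>v t) \<bullet>c (cmat M *\<^sub>v u)"
    unfolding Xy using cscalar_prod_cmat_transpose[OF Rt _ y, of "cmat (minv M) *\<^sub>v t"] t Ry by simp
  also have "\<dots> = t \<bullet>c u"
    using cscalar_prod_cmat_symmetric[OF Minv(1) Minv_sym t, of "cmat M *\<^sub>v u"]
      cmat_inverse_mult_vec[OF Minv(1) M Minv(3) u] t u by simp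
  finally have "Re (t \<bullet>c u) = Re ((cmat X *\<^sub>v y) \<bullet>c y)" by simp
  also have "\<dots> \<le> \<kappa> * sqnorm y" by (rule kappa_rayleigh[OF y])
  also have "sqnorm y = Re (u \<bullet>c (cmat M *\<^sub>v u))" unfolding y_def cscalar_prod_M[OF u] by simp
  finally show ?thesis unfolding u_def .
qed

lemma kappa_pos: "\<kappa> > 0"
proof -
  define t where "t = (unit_vec k 0 :: complex vec)"
  have t: "t \<in> carrier_vec k" "t \<noteq> 0\<^sub>v k" unfolding t_def using unit_vec_nonzero[OF k_pos] by auto
  have "0 < Re (t \<bullet>c (cmat L *\<^sub>v t))" by (rule L_pos_def[OF t])
  also have "\<dots> \<le> \<kappa> * Re ((cmat L *\<^sub>v t) \<bullet>c (cmat M *\<^sub>v (cmat L *\<^sub>v t)))" by (rule L_form_le_kappa[OF t(1)])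
  finally show ?thesis
    using cscalar_prod_M[of "cmat L *\<^sub>v t"] t sqnorm_nonneg[of "cmat R\<^sup>T *\<^sub>v (cmat L *\<^sub>v t)"]
    by (simp add: zero_less_mult_iff)
qed

lemma peak_nonneg: "peak \<ge> 0"
  using kappa_pos rho_pos by simp

lemma Minv_psd: assumes t: "t \<in> carrier_vec k" shows "0 \<le> Re (t \<bullet>c (cmat (minv M) *\<^sub>v t))"
proof -
  define u where "u = cmat (minv M) *\<^sub>v t"
  have u: "u \<in> carrier_vec k" unfolding u_def using t by simp
  have "t = cmat M *\<^sub>v u" unfolding u_def using cmat_inverse_mult_vec[OF M Minv(1,2) t] by simp
  hence "t \<bullet>c u = u \<bullet>c (cmat M *\<^sub>v u)" using cscalar_prod_cmat_symmetric[OF M M_sym u u] by simp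
  thus ?thesis unfolding u_def[symmetric] cscalar_prod_M[OF u] by (simp add: sqnorm_nonneg)
qed

lemma projection_form_le:
  assumes y: "y \<in> carrier_vec m"
  shows "Re ((cmat R *\<^sub>v y) \<bullet>c (cmat (minv M) *\<^sub>v (cmat R *\<^sub>v y))) \<le> sqnorm y"
proof -
  define r where "r = cmat R *\<^sub>v y"
  define u where "u = cmat (minv M) *\<^sub>v r"
  \<comment> \<open>p is the orthogonal projection of y onto the range of R^T\<close>
  define p where "p = cmat R\<^sup>T *\<^sub>v u"
  have r: "r \<in> carrier_vec k" and u: "u \<in> carrier_vec k" and p: "p \<in> carrier_vec m"
    using y unfolding r_def u_def p_def by simp_all
  have py: "p \<bullet>c y = u \<bullet>c r" unfolding p_def r_def using cscalar_prod_cmat_transpose[OF Rt u y] by simp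
  have "cmat R *\<^sub>v p = r"
    unfolding p_def u_def using cmat_mult_mat_vec[OF R Rt] cmat_inverse_mult_vec[OF M Minv(1,2) r] r by simp
  hence pp: "p \<bullet>c p = u \<bullet>c r"
    using cscalar_prod_cmat_transpose[OF Rt u p] unfolding p_def by simp
  have yp: "Re (y \<bullet>c p) = Re (u \<bullet>c r)" using cscalar_prod_swap[OF p y] py by simp
  have "(y - p) \<bullet>c (y - p) = (y \<bullet>c y - y \<bullet>c p) - (p \<bullet>c y - p \<bullet>c p)"
    using y p by (simp add: cscalar_prod_diff_left[of _ m] cscalar_prod_diff_right[of _ m])
  hence "sqnorm (y - p) = sqnorm y - Re (u \<bullet>c r)"
    unfolding sqnorm_def using yp py pp by simp
  hence "Re (u \<bullet>c r) \<le> sqnorm y" using sqnorm_nonneg[of "y - p"] by simp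
  moreover have "u \<bullet>c r = r \<bullet>c (cmat (minv M) *\<^sub>v r)"
    unfolding u_def by (rule cscalar_prod_cmat_symmetric[OF Minv(1) Minv_sym r r])
  ultimately show ?thesis unfolding r_def by simp
qed

lemma resolvent_carrier: "resolvent s \<in> carrier_mat k k" using L M by simp

lemma scaled_identity_weights: "L * R * (\<rho> \<cdot>\<^sub>m 1\<^sub>m m) * R\<^sup>T = \<rho> \<cdot>\<^sub>m (L * M)"
proof -
  have LR: "L * R \<in> carrier_mat k m" using L R by simp
  have "L * R * (\<rho> \<cdot>\<^sub>m 1\<^sub>m m) = \<rho> \<cdot>\<^sub>m (L * R)"
    using mult_smult_distrib[OF LR one_carrier_mat, of \<rho>] right_mult_one_mat[OF LR] by simp
  thus ?thesis using mult_smult_assoc_mat[OF LR Rt] assoc_mult_mat[OF L R Rt] by simp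
qed

lemma shifted_product_mult_vec:
  assumes P: "P \<in> carrier_mat k k" and Q: "Q \<in> carrier_mat k k" and z: "z \<in> carrier_vec k"
  shows "(c \<cdot>\<^sub>m 1\<^sub>m k + cmat (\<rho> \<cdot>\<^sub>m (P * Q))) *\<^sub>v z = c \<cdot>\<^sub>v z + of_real \<rho> \<cdot>\<^sub>v (cmat P *\<^sub>v (cmat Q *\<^sub>v z))"
proof -
  have "(c \<cdot>\<^sub>m 1\<^sub>m k + cmat (\<rho> \<cdot>\<^sub>m (P * Q))) *\<^sub>v z = (c \<cdot>\<^sub>m 1\<^sub>m k) *\<^sub>v z + cmat (\<rho> \<cdot>\<^sub>m (P * Q)) *\<^sub>v z"
    by (rule add_mult_distrib_mat_vec) (use P Q z in auto)
  moreover have "(c \<cdot>\<^sub>m 1\<^sub>m k) *\<^sub>v z = c \<cdot>\<^sub>v z" using z by auto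
  ultimately show ?thesis
    using cmat_smult_mult_vec[OF mult_carrier_mat[OF P Q] z] cmat_mult_mat_vec[OF P Q z] by simp
qed

lemma resolvent_mult_vec:
  "z \<in> carrier_vec k \<Longrightarrow> resolvent s *\<^sub>v z = s \<cdot>\<^sub>v z + of_real \<rho> \<cdot>\<^sub>v (cmat L *\<^sub>v (cmat M *\<^sub>v z))"
  by (rule shifted_product_mult_vec[OF L M])

lemma mat_adjoint_resolvent: "mat_adjoint (resolvent s) = cnj s \<cdot>\<^sub>m 1\<^sub>m k + cmat (\<rho> \<cdot>\<^sub>m (M * L))"
proof -
  have "(\<rho> \<cdot>\<^sub>m (L * M))\<^sup>T = \<rho> \<cdot>\<^sub>m (M * L)"
    using transpose_mult[OF L M] L_sym M_sym by (metis transpose_smult_mat)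
  thus ?thesis
    using L M by (simp add: mat_adjoint_add[of _ k k] mat_adjoint_smult mat_adjoint_cmat)
qed

lemma resolvent_adjoint_mult_vec:
  "z \<in> carrier_vec k \<Longrightarrow> mat_adjoint (resolvent s) *\<^sub>v z = cnj s \<cdot>\<^sub>v z + of_real \<rho> \<cdot>\<^sub>v (cmat M *\<^sub>v (cmat L *\<^sub>v z))"
  unfolding mat_adjoint_resolvent by (rule shifted_product_mult_vec[OF M L])

lemma resolvent_inj:
  assumes s: "Re s = 0" and z: "z \<in> carrier_vec k" and Az: "resolvent s *\<^sub>v z = 0\<^sub>v k"
  shows "z = 0\<^sub>v k"
proof -
  define w where "w = cmat M *\<^sub>v z"
  have w: "w \<in> carrier_vec k" unfolding w_def using z by simp
  \<comment> \<open>pair with M z: the term s z contributes a purely imaginary part, the L part a positive real one\<close>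
  have "0 = (resolvent s *\<^sub>v z) \<bullet>c w" unfolding Az using w by simp
  also have "\<dots> = s * (z \<bullet>c w) + of_real \<rho> * ((cmat L *\<^sub>v w) \<bullet>c w)"
    unfolding resolvent_mult_vec[OF z] w_def[symmetric] using z w
    by (simp add: cscalar_prod_add_left[of _ k] cscalar_prod_smult_left[of _ k])
  also have "z \<bullet>c w = of_real (sqnorm (cmat R\<^sup>T *\<^sub>v z))" unfolding w_def by (rule cscalar_prod_M[OF z])
  also have "(cmat L *\<^sub>v w) \<bullet>c w = w \<bullet>c (cmat L *\<^sub>v w)"
    by (rule cscalar_prod_cmat_symmetric[OF L L_sym w w])
  finally have e: "0 = s * of_real (sqnorm (cmat R\<^sup>T *\<^sub>v z)) + of_real \<rho> * (w \<bullet>c (cmat L *\<^sub>v w))" .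
  have "\<rho> * Re (w \<bullet>c (cmat L *\<^sub>v w)) = 0" using arg_cong[OF e, of Re] s by simp
  hence "Re (w \<bullet>c (cmat L *\<^sub>v w)) = 0" using rho_pos by simp
  hence "w = 0\<^sub>v k" using L_pos_def[OF w] by force
  thus ?thesis using M_inj[OF z] unfolding w_def by blast
qed

lemma minv_resolvent:
  assumes "Re s = 0"
  shows "minv (resolvent s) \<in> carrier_mat k k" "resolvent s * minv (resolvent s) = 1\<^sub>m k"
    "minv (resolvent s) * resolvent s = 1\<^sub>m k"
  using minv_inverse[OF resolvent_carrier] det_0_iff_vec_prod_zero[OF resolvent_carrier] resolvent_inj[OF assms] by blast+

lemma transfer_carrier: "Re s = 0 \<Longrightarrow> transfer s \<in> carrier_mat m q"
  using minv_resolvent(1) Rt B by (meson cmat_carrier mult_carrier_mat)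

lemma transfer_adjoint_mult_vec:
  assumes s: "Re s = 0" and y: "y \<in> carrier_vec m"
  defines "t \<equiv> mat_adjoint (minv (resolvent s)) *\<^sub>v (cmat R *\<^sub>v y)"
  shows "t \<in> carrier_vec k"
    and "mat_adjoint (transfer s) *\<^sub>v y = cmat B\<^sup>T *\<^sub>v t"
    and "cmat R *\<^sub>v y = cnj s \<cdot>\<^sub>v t + of_real \<rho> \<cdot>\<^sub>v (cmat M *\<^sub>v (cmat L *\<^sub>v t))"
proof -
  define G where "G = minv (resolvent s)"
  note G = minv_resolvent[OF s, folded G_def]
  have Ry: "cmat R *\<^sub>v y \<in> carrier_vec k" using y by simp
  show t: "t \<in> carrier_vec k" unfolding t_def G_def[symmetric] by (rule mat_adjoint_mult_vec_carrier[OF G(1) Ry])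
  have "mat_adjoint (transfer s) = cmat B\<^sup>T * (mat_adjoint G * cmat R)"
    unfolding G_def[symmetric]
    using mat_adjoint_mult[OF mult_carrier_mat[OF cmat_carrier[OF Rt] G(1)] cmat_carrier[OF B]]
      mat_adjoint_mult[OF cmat_carrier[OF Rt] G(1)] G(1) R B
    by (simp add: mat_adjoint_cmat assoc_mult_mat[of _ q k _ k _ m])
  thus "mat_adjoint (transfer s) *\<^sub>v y = cmat B\<^sup>T *\<^sub>v t"
    unfolding t_def G_def[symmetric]
    using assoc_mult_mat_vec[OF cmat_carrier[OF Bt] mult_carrier_mat[OF mat_adjoint_carrier[OF G(1)] cmat_carrier[OF R]] y]
      assoc_mult_mat_vec[OF mat_adjoint_carrier[OF G(1)] cmat_carrier[OF R] y] by simp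
  have "mat_adjoint (resolvent s) *\<^sub>v t = mat_adjoint (G * resolvent s) *\<^sub>v (cmat R *\<^sub>v y)"
    unfolding t_def G_def[symmetric] using G(1) resolvent_carrier Ry
    by (simp add: mat_adjoint_mult[OF G(1) resolvent_carrier] assoc_mult_mat_vec[of _ k k _ k])
  also have "\<dots> = cmat R *\<^sub>v y" unfolding G(3) using Ry by simp
  finally show "cmat R *\<^sub>v y = cnj s \<cdot>\<^sub>v t + of_real \<rho> \<cdot>\<^sub>v (cmat M *\<^sub>v (cmat L *\<^sub>v t))"
    unfolding resolvent_adjoint_mult_vec[OF t] by simp
qed

lemma B_gram_mult_vec:
  assumes t: "t \<in> carrier_vec k"
  shows "cmat B *\<^sub>v (cmat B\<^sup>T *\<^sub>v t) = of_real (\<sigma>w\<^sup>2) \<cdot>\<^sub>v (cmat L *\<^sub>v t)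
     + of_real (\<sigma>v\<^sup>2 * \<rho>) \<cdot>\<^sub>v (cmat L *\<^sub>v (cmat M *\<^sub>v (cmat L *\<^sub>v t)))"
proof -
  have LML: "L * M * L \<in> carrier_mat k k" using L M by simp
  have "cmat B *\<^sub>v (cmat B\<^sup>T *\<^sub>v t) = cmat (\<sigma>w\<^sup>2 \<cdot>\<^sub>m L) *\<^sub>v t + cmat ((\<sigma>v\<^sup>2 * \<rho>) \<cdot>\<^sub>m (L * M * L)) *\<^sub>v t"
    using cmat_mult_mat_vec[OF B Bt t] cmat_add[of "\<sigma>w\<^sup>2 \<cdot>\<^sub>m L" k k] L LML t
    by (simp add: B_gram add_mult_distrib_mat_vec[of _ k k])
  also have "\<dots> = of_real (\<sigma>w\<^sup>2) \<cdot>\<^sub>v (cmat L *\<^sub>v t)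
     + of_real (\<sigma>v\<^sup>2 * \<rho>) \<cdot>\<^sub>v (cmat L *\<^sub>v (cmat M *\<^sub>v (cmat L *\<^sub>v t)))"
    using cmat_smult_mult_vec[OF L t] cmat_smult_mult_vec[OF LML t]
      cmat_mult_mat_vec[OF mult_carrier_mat[OF L M] L t] cmat_mult_mat_vec[OF L M] t by simp
  finally show ?thesis .
qed

lemma sqnorm_B_transpose:
  assumes t: "t \<in> carrier_vec k"
  shows "sqnorm (cmat B\<^sup>T *\<^sub>v t) = \<sigma>w\<^sup>2 * Re (t \<bullet>c (cmat L *\<^sub>v t))
    + \<sigma>v\<^sup>2 * \<rho> * Re ((cmat L *\<^sub>v t) \<bullet>c (cmat M *\<^sub>v (cmat L *\<^sub>v t)))"
proof -
  define u where "u = cmat L *\<^sub>v t"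
  have u: "u \<in> carrier_vec k" unfolding u_def using t by simp
  have "(cmat B\<^sup>T *\<^sub>v t) \<bullet>c (cmat B\<^sup>T *\<^sub>v t) = t \<bullet>c (cmat B *\<^sub>v (cmat B\<^sup>T *\<^sub>v t))"
    using cscalar_prod_cmat_transpose[OF Bt t, of "cmat B\<^sup>T *\<^sub>v t"] t by simp
  also have "\<dots> = of_real (\<sigma>w\<^sup>2) * (t \<bullet>c u) + of_real (\<sigma>v\<^sup>2 * \<rho>) * (t \<bullet>c (cmat L *\<^sub>v (cmat M *\<^sub>v u)))"
    unfolding B_gram_mult_vec[OF t] u_def[symmetric] using t u
    by (simp add: cscalar_prod_add_right[of _ k] cscalar_prod_smult_right[of _ k])
  also have "t \<bullet>c (cmat L *\<^sub>v (cmat M *\<^sub>v u)) = u \<bullet>c (cmat M *\<^sub>v u)"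
    unfolding u_def using cscalar_prod_cmat_symmetric[OF L L_sym t, of "cmat M *\<^sub>v (cmat L *\<^sub>v t)"] t by simp
  finally show ?thesis unfolding sqnorm_def u_def by simp
qed

lemma Minv_form_split:
  assumes s: "Re s = 0" and t: "t \<in> carrier_vec k" and u: "u \<in> carrier_vec k"
    and tu_real: "u \<bullet>c t = t \<bullet>c u"
  shows "Re ((cnj s \<cdot>\<^sub>v t + of_real \<rho> \<cdot>\<^sub>v (cmat M *\<^sub>v u)) \<bullet>c
        (cmat (minv M) *\<^sub>v (cnj s \<cdot>\<^sub>v t + of_real \<rho> \<cdot>\<^sub>v (cmat M *\<^sub>v u))))
      = (cmod s)\<^sup>2 * Re (t \<bullet>c (cmat (minv M) *\<^sub>v t)) + \<rho>\<^sup>2 * Re (u \<bullet>c (cmat M *\<^sub>v u))"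
proof -
  have Mu: "cmat M *\<^sub>v u \<in> carrier_vec k" and mt: "cmat (minv M) *\<^sub>v t \<in> carrier_vec k" using t u by simp_all
  have "cmat (minv M) *\<^sub>v (cnj s \<cdot>\<^sub>v t + of_real \<rho> \<cdot>\<^sub>v (cmat M *\<^sub>v u))
      = cnj s \<cdot>\<^sub>v (cmat (minv M) *\<^sub>v t) + of_real \<rho> \<cdot>\<^sub>v u"
    using t Mu cmat_inverse_mult_vec[OF Minv(1) M Minv(3) u]
    by (simp add: mult_add_distrib_mat_vec[OF cmat_carrier[OF Minv(1)]] mult_mat_vec[OF cmat_carrier[OF Minv(1)]])
  moreover have "(cmat M *\<^sub>v u) \<bullet>c (cmat (minv M) *\<^sub>v t) = u \<bullet>c t"
    using cscalar_prod_cmat_symmetric[OF M M_sym u mt] cmat_inverse_mult_vec[OF M Minv(1,2) t] by simp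
  moreover have "(cmat M *\<^sub>v u) \<bullet>c u = u \<bullet>c (cmat M *\<^sub>v u)"
    by (rule cscalar_prod_cmat_symmetric[OF M M_sym u u])
  \<comment> \<open>the cross terms carry the factor s + cnj s = 0\<close>
  ultimately have "(cnj s \<cdot>\<^sub>v t + of_real \<rho> \<cdot>\<^sub>v (cmat M *\<^sub>v u)) \<bullet>c
        (cmat (minv M) *\<^sub>v (cnj s \<cdot>\<^sub>v t + of_real \<rho> \<cdot>\<^sub>v (cmat M *\<^sub>v u)))
      = (cnj s * s) * (t \<bullet>c (cmat (minv M) *\<^sub>v t)) + of_real \<rho> * (t \<bullet>c u) * (s + cnj s)
        + of_real (\<rho>\<^sup>2) * (u \<bullet>c (cmat M *\<^sub>v u))"
    using cscalar_prod_lincomb[OF t Mu mt u, of "cnj s" "of_real \<rho>" "cnj s" "of_real \<rho>"] tu_real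
    by (simp add: algebra_simps power2_eq_square)
  also have "s + cnj s = 0" using s by (simp add: complex_eq_iff)
  also have "cnj s * s = of_real ((cmod s)\<^sup>2)" using complex_norm_square[of s] by (simp add: mult.commute)
  finally show ?thesis by simp
qed

lemma sqnorm_transfer_adjoint_le:
  assumes s: "Re s = 0" and y: "y \<in> carrier_vec m"
  shows "sqnorm (mat_adjoint (transfer s) *\<^sub>v y) \<le> peak * sqnorm y"
proof -
  define t where "t = mat_adjoint (minv (resolvent s)) *\<^sub>v (cmat R *\<^sub>v y)"
  note t = transfer_adjoint_mult_vec[OF s y, folded t_def]
  define u where "u = cmat L *\<^sub>v t"
  have u: "u \<in> carrier_vec k" unfolding u_def using t(1) by simp
  define Q where "Q = Re (u \<bullet>c (cmat M *\<^sub>v u))"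
  have tu: "u \<bullet>c t = t \<bullet>c u"
    unfolding u_def by (rule cscalar_prod_cmat_symmetric[OF L L_sym t(1) t(1)])
  have "sqnorm (mat_adjoint (transfer s) *\<^sub>v y) = \<sigma>w\<^sup>2 * Re (t \<bullet>c u) + \<sigma>v\<^sup>2 * \<rho> * Q"
    unfolding t(2) sqnorm_B_transpose[OF t(1)] u_def Q_def ..
  also have "\<dots> \<le> \<sigma>w\<^sup>2 * (\<kappa> * Q) + \<sigma>v\<^sup>2 * \<rho> * Q"
    using L_form_le_kappa[OF t(1)] unfolding u_def Q_def by (simp add: mult_left_mono)
  also have "\<dots> = peak * (\<rho>\<^sup>2 * Q)" using rho_pos by (simp add: field_simps power2_eq_square)
  also have "\<dots> \<le> peak * Re ((cmat R *\<^sub>v y) \<bullet>c (cmat (minv M) *\<^sub>v (cmat R *\<^sub>v y)))"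
    unfolding t(3)[folded u_def] Minv_form_split[OF s t(1) u tu] Q_def[symmetric]
    using peak_nonneg Minv_psd[OF t(1)] by (intro mult_left_mono) auto
  also have "\<dots> \<le> peak * sqnorm y"
    using projection_form_le[OF y] peak_nonneg by (rule mult_left_mono)
  finally show ?thesis .
qed

lemma B_gram_transfer_zero_adjoint:
  assumes y: "y \<in> carrier_vec m"
  shows "cmat B *\<^sub>v (mat_adjoint (transfer 0) *\<^sub>v y)
    = of_real (\<sigma>w\<^sup>2 / \<rho>) \<cdot>\<^sub>v (cmat (minv M) *\<^sub>v (cmat R *\<^sub>v y)) + of_real (\<sigma>v\<^sup>2) \<cdot>\<^sub>v (cmat L *\<^sub>v (cmat R *\<^sub>v y))"
proof -
  have s: "Re (0 :: complex) = 0" by simp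
  define r where "r = cmat R *\<^sub>v y"
  define mr where "mr = cmat (minv M) *\<^sub>v r"
  have r: "r \<in> carrier_vec k" and mr: "mr \<in> carrier_vec k" using y unfolding r_def mr_def by simp_all
  define t where "t = mat_adjoint (minv (resolvent 0)) *\<^sub>v r"
  note t = transfer_adjoint_mult_vec[OF s y, folded r_def, folded t_def]
  have "r = of_real \<rho> \<cdot>\<^sub>v (cmat M *\<^sub>v (cmat L *\<^sub>v t))"
    using t(3) smult_zero_left_vec[OF t(1)] t(1) by simp
  hence "mr = of_real \<rho> \<cdot>\<^sub>v (cmat L *\<^sub>v t)"
    unfolding mr_def using t(1) cmat_inverse_mult_vec[OF Minv(1) M Minv(3)] by simp
  hence Lt: "cmat L *\<^sub>v t = of_real (1 / \<rho>) \<cdot>\<^sub>v mr"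
    using t(1) rho_pos by (simp add: smult_smult_assoc)
  have "cmat L *\<^sub>v (cmat M *\<^sub>v mr) = cmat L *\<^sub>v r"
    unfolding mr_def using cmat_inverse_mult_vec[OF M Minv(1,2) r] by simp
  thus ?thesis
    unfolding t(2) B_gram_mult_vec[OF t(1)] Lt r_def[symmetric] mr_def[symmetric] using mr rho_pos
    by (simp add: smult_smult_assoc)
qed

lemma minv_resolvent_zero_mult_vec:
  assumes r: "r \<in> carrier_vec k"
  shows "minv (resolvent 0) *\<^sub>v (of_real a \<cdot>\<^sub>v (cmat (minv M) *\<^sub>v r) + of_real b \<cdot>\<^sub>v (cmat L *\<^sub>v r))
    = of_real (a / \<rho>) \<cdot>\<^sub>v (cmat (minv N) *\<^sub>v r) + of_real (b / \<rho>) \<cdot>\<^sub>v (cmat (minv M) *\<^sub>v r)"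
    (is "_ *\<^sub>v ?w = ?z")
proof -
  have s: "Re (0 :: complex) = 0" by simp
  have z: "?z \<in> carrier_vec k" using r by simp
  have "cmat L *\<^sub>v (cmat M *\<^sub>v (cmat (minv N) *\<^sub>v r)) = cmat (minv M) *\<^sub>v r"
    using cmat_mult_mat_vec[OF mult_carrier_mat[OF L M] Ninv(1) r] cmat_mult_mat_vec[OF L M] r
    by (simp add: L_M_Ninv)
  moreover have "cmat L *\<^sub>v (cmat M *\<^sub>v (cmat (minv M) *\<^sub>v r)) = cmat L *\<^sub>v r"
    using cmat_inverse_mult_vec[OF M Minv(1,2) r] by simp
  ultimately have "resolvent 0 *\<^sub>v ?z = of_real \<rho> \<cdot>\<^sub>v (of_real (a / \<rho>) \<cdot>\<^sub>v (cmat (minv M) *\<^sub>v r)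
      + of_real (b / \<rho>) \<cdot>\<^sub>v (cmat L *\<^sub>v r))"
    unfolding resolvent_mult_vec[OF z] smult_zero_left_vec[OF z] using r by simp
  also have "\<dots> = ?w"
    using smult_add_distrib_vec[of "of_real (a / \<rho>) \<cdot>\<^sub>v (cmat (minv M) *\<^sub>v r)" k] r rho_pos
    by (simp add: smult_smult_assoc)
  finally have "resolvent 0 *\<^sub>v ?z = ?w" .
  thus ?thesis
    using assoc_mult_mat_vec[OF minv_resolvent(1)[OF s] resolvent_carrier z, of 0] minv_resolvent(3)[OF s] z by simp
qed

lemma transfer_zero_attains_peak:
  obtains y0 where "y0 \<in> carrier_vec m" "y0 \<noteq> 0\<^sub>v m"
    "transfer 0 *\<^sub>v (mat_adjoint (transfer 0) *\<^sub>v y0) = of_real peak \<cdot>\<^sub>v y0"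
proof -
  have s: "Re (0 :: complex) = 0" by simp
  obtain y0 where y0: "y0 \<in> carrier_vec m" "y0 \<noteq> 0\<^sub>v m" and Xy0: "cmat X *\<^sub>v y0 = of_real \<kappa> \<cdot>\<^sub>v y0"
    using kappa_eigenvector by blast
  define r where "r = cmat R *\<^sub>v y0"
  define nr where "nr = cmat (minv N) *\<^sub>v r"
  have r: "r \<in> carrier_vec k" and nr: "nr \<in> carrier_vec k" using y0 unfolding r_def nr_def by simp_all
  have Rnr: "cmat R\<^sup>T *\<^sub>v nr = of_real \<kappa> \<cdot>\<^sub>v y0"
    using X_mult_vec[OF y0(1)] Xy0 unfolding nr_def r_def by simp
  \<comment> \<open>y0 lies in the range of R^T, on which R^T M^-1 R is the identity\<close>
  have y0_eq: "y0 = of_real (1 / \<kappa>) \<cdot>\<^sub>v (cmat R\<^sup>T *\<^sub>v nr)"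
    unfolding Rnr using kappa_pos y0(1) by (simp add: smult_smult_assoc)
  have "r = of_real (1 / \<kappa>) \<cdot>\<^sub>v (cmat M *\<^sub>v nr)"
    unfolding r_def using cmat_R_mult_vec_smult[of "cmat R\<^sup>T *\<^sub>v nr"] cmat_mult_mat_vec[OF R Rt nr] nr
    by (subst y0_eq) simp
  hence "cmat (minv M) *\<^sub>v r = of_real (1 / \<kappa>) \<cdot>\<^sub>v nr"
    using cmat_inverse_mult_vec[OF Minv(1) M Minv(3) nr] nr by simp
  hence Rmr: "cmat R\<^sup>T *\<^sub>v (cmat (minv M) *\<^sub>v r) = y0"
    using y0_eq nr by simp
  have "transfer 0 *\<^sub>v (mat_adjoint (transfer 0) *\<^sub>v y0)
      = cmat R\<^sup>T *\<^sub>v (minv (resolvent 0) *\<^sub>v (cmat B *\<^sub>v (mat_adjoint (transfer 0) *\<^sub>v y0)))"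
    using assoc_mult_mat_vec[OF mult_carrier_mat[OF cmat_carrier[OF Rt] minv_resolvent(1)[OF s]] cmat_carrier[OF B]]
      assoc_mult_mat_vec[OF cmat_carrier[OF Rt] minv_resolvent(1)[OF s]] y0(1) transfer_carrier[OF s]
    by (simp add: mat_adjoint_mult_vec_carrier)
  also have "\<dots> = of_real (\<sigma>w\<^sup>2 / \<rho>\<^sup>2) \<cdot>\<^sub>v (of_real \<kappa> \<cdot>\<^sub>v y0) + of_real (\<sigma>v\<^sup>2 / \<rho>) \<cdot>\<^sub>v y0"
    unfolding B_gram_transfer_zero_adjoint[OF y0(1)] r_def[symmetric] minv_resolvent_zero_mult_vec[OF r]
      nr_def[symmetric] using nr r by (simp add: Rnr Rmr power2_eq_square)
  also have "\<dots> = of_real peak \<cdot>\<^sub>v y0"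
    using y0(1) by (intro eq_vecI) (auto simp: algebra_simps)
  finally show thesis by (rule that[OF y0])
qed

lemma sigma_max_transfer_le: "Re s = 0 \<Longrightarrow> sigma_max (transfer s) \<le> sqrt peak"
  by (rule sigma_max_le[OF transfer_carrier q_pos peak_nonneg sqnorm_transfer_adjoint_le])

lemma sigma_max_transfer_zero: "sigma_max (transfer 0) = sqrt peak"
proof -
  have s: "Re (0 :: complex) = 0" by simp
  obtain y0 where y0: "y0 \<in> carrier_vec m" "y0 \<noteq> 0\<^sub>v m"
    and attained: "transfer 0 *\<^sub>v (mat_adjoint (transfer 0) *\<^sub>v y0) = of_real peak \<cdot>\<^sub>v y0"
    by (rule transfer_zero_attains_peak)
  note bound = sqnorm_transfer_adjoint_le[OF s]
  show ?thesis
    by (rule sigma_max_eqI[OF transfer_carrier[OF s] q_pos peak_nonneg bound y0 attained])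
qed

lemma hinf_norm_transfer: "hinf_norm transfer = sqrt peak"
  unfolding hinf_norm_def
proof (rule cSup_eq_maximum)
  show "sqrt peak \<in> range (\<lambda>\<omega>. sigma_max (transfer (\<i> * complex_of_real \<omega>)))"
    using sigma_max_transfer_zero by (intro image_eqI[where x = 0]) auto
next
  fix x assume "x \<in> range (\<lambda>\<omega>. sigma_max (transfer (\<i> * complex_of_real \<omega>)))"
  then obtain \<omega> where "x = sigma_max (transfer (\<i> * complex_of_real \<omega>))" by blast
  thus "x \<le> sqrt peak" using sigma_max_transfer_le[of "\<i> * complex_of_real \<omega>"] by simp
qed

end

section \<open>Incidence matrices of a graph with a spanning tree\<close>

lemma D_tree_carrier: "D_tree n es \<in> carrier_mat n (n - 1)"
  unfolding D_tree_def by simp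

lemma D_tree_index:
  "i < n \<Longrightarrow> l < n - 1 \<Longrightarrow> n - 1 \<le> length es \<Longrightarrow>
    D_tree n es $$ (i, l) = (if i = fst (es ! l) then 1 else if i = snd (es ! l) then -1 else 0)"
  unfolding D_tree_def incidence_def by simp

lemma sum_incidence_column:
  fixes y :: "nat \<Rightarrow> real"
  assumes "a < n" "b < n" "a \<noteq> b"
  shows "(\<Sum>j<n. (if j = a then 1 else if j = b then -1 else 0) * y j) = y a - y b"
proof -
  have "(\<Sum>j<n. (if j = a then 1 else if j = b then -1 else 0) * y j)
      = (\<Sum>j<n. (if j = a then y j else 0) - (if j = b then y j else 0))"
    by (rule sum.cong) (use assms in auto)
  also have "\<dots> = y a - y b" using assms by (simp add: sum_subtractf)
  finally show ?thesis .
qed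

lemma D_tree_transpose_kernel_constant:
  assumes vg: "valid_graph_with_tree n es"
    and ker: "\<And>l. l < n - 1 \<Longrightarrow> (\<Sum>j<n. D_tree n es $$ (j, l) * y j) = 0"
    and i: "i < n"
  shows "y i = y 0"
proof -
  have len: "n - 1 \<le> length es"
    and ends: "\<And>l. l < length es \<Longrightarrow> fst (es ! l) < n \<and> snd (es ! l) < n \<and> fst (es ! l) \<noteq> snd (es ! l)"
    and conn: "(0, i) \<in> (edge_rel (take (n - 1) es))\<^sup>*"
    using vg i unfolding valid_graph_with_tree_def by auto
  have edge: "y (fst (es ! l)) = y (snd (es ! l))" if l: "l < n - 1" for l
  proof -
    have "(\<Sum>j<n. D_tree n es $$ (j, l) * y j)
        = (\<Sum>j<n. (if j = fst (es ! l) then 1 else if j = snd (es ! l) then -1 else 0) * y j)"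
      by (rule sum.cong) (use D_tree_index l len in auto)
    also have "\<dots> = y (fst (es ! l)) - y (snd (es ! l))"
      by (rule sum_incidence_column) (use ends[of l] l len in auto)
    finally show ?thesis using ker[OF l] by simp
  qed
  have "y u = y v" if uv: "(u, v) \<in> edge_rel (take (n - 1) es)" for u v
  proof -
    obtain l where l: "l < n - 1" and e: "es ! l = (u, v) \<or> es ! l = (v, u)"
      using uv len unfolding edge_rel_def by (auto simp: in_set_conv_nth)
    show ?thesis using edge[OF l] e by auto
  qed
  from conn this show ?thesis by (induction rule: rtrancl_induct) auto
qed

definition grounded_D_tree :: "nat \<Rightarrow> (nat \<times> nat) list \<Rightarrow> real mat" where
  "grounded_D_tree n es = mat (n - 1) (n - 1) (\<lambda>(i, l). D_tree n es $$ (i + 1, l))"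

lemma det_grounded_D_tree:
  assumes vg: "valid_graph_with_tree n es"
  shows "det (grounded_D_tree n es) \<noteq> 0"
proof -
  let ?G = "grounded_D_tree n es"
  have n: "n = Suc (n - 1)" using vg unfolding valid_graph_with_tree_def by auto
  have G: "?G \<in> carrier_mat (n - 1) (n - 1)" unfolding grounded_D_tree_def by simp
  have inj: "z = 0\<^sub>v (n - 1)" if z: "z \<in> carrier_vec (n - 1)" and Gz: "?G\<^sup>T *\<^sub>v z = 0\<^sub>v (n - 1)" for z
  proof -
    \<comment> \<open>extend z by the value 0 at node 0 to a potential in the kernel of D^T\<close>
    define y where "y j = (if j = 0 then 0 else z $ (j - 1))" for j
    have "(\<Sum>j<n. D_tree n es $$ (j, l) * y j) = 0" if l: "l < n - 1" for l
    proof -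
      have "(\<Sum>j<n. D_tree n es $$ (j, l) * y j) = (\<Sum>i<n - 1. D_tree n es $$ (Suc i, l) * z $ i)"
        by (subst n, subst sum.lessThan_Suc_shift) (simp add: y_def)
      also have "\<dots> = (?G\<^sup>T *\<^sub>v z) $ l"
        using l z G by (auto simp: scalar_prod_def lessThan_atLeast0 grounded_D_tree_def mult.commute
            intro!: sum.cong)
      finally show ?thesis using Gz l by simp
    qed
    hence y_const: "y i = y 0" if "i < n" for i using D_tree_transpose_kernel_constant[OF vg _ that] by blast
    show ?thesis
    proof (rule eq_vecI)
      fix i assume "i < dim_vec (0\<^sub>v (n - 1) :: real vec)"
      hence "Suc i < n" using n by simp
      thus "z $ i = 0\<^sub>v (n - 1) $ i" using y_const[of "Suc i"] by (simp add: y_def)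
    qed (use z in simp)
  qed
  have GT: "?G\<^sup>T \<in> carrier_mat (n - 1) (n - 1)" using G by simp
  have "det ?G\<^sup>T \<noteq> 0" using det_0_iff_vec_prod_zero[OF GT] inj by blast
  thus ?thesis using det_transpose[OF G] by simp
qed

lemma cmat_D_tree_inj:
  assumes vg: "valid_graph_with_tree n es" and x: "x \<in> carrier_vec (n - 1)"
    and Dx: "cmat (D_tree n es) *\<^sub>v x = 0\<^sub>v n"
  shows "x = 0\<^sub>v (n - 1)"
proof -
  have G: "grounded_D_tree n es \<in> carrier_mat (n - 1) (n - 1)" unfolding grounded_D_tree_def by simp
  have "cmat (grounded_D_tree n es) *\<^sub>v x = 0\<^sub>v (n - 1)"
  proof (rule eq_vecI)
    fix i assume "i < dim_vec (0\<^sub>v (n - 1) :: complex vec)"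
    hence i: "i < n - 1" by simp
    have "(cmat (grounded_D_tree n es) *\<^sub>v x) $ i = (cmat (D_tree n es) *\<^sub>v x) $ (i + 1)"
      using i x by (auto simp: scalar_prod_def grounded_D_tree_def cmat_def D_tree_def)
    thus "(cmat (grounded_D_tree n es) *\<^sub>v x) $ i = 0\<^sub>v (n - 1) $ i" using Dx i by simp
  qed (use G in simp)
  thus ?thesis
    using det_0_iff_vec_prod_zero[OF cmat_carrier[OF G]] det_grounded_D_tree[OF vg] x
    by (auto simp: det_cmat)
qed

lemma R_mat_carrier: "R_mat n es \<in> carrier_mat (n - 1) (length es)"
  unfolding R_mat_def by simp

lemma R_mat_index:
  "i < n - 1 \<Longrightarrow> l < n - 1 \<Longrightarrow> l < length es \<Longrightarrow> R_mat n es $$ (i, l) = (if i = l then 1 else 0)"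
  unfolding R_mat_def by simp

lemma cmat_R_mat_transpose_inj:
  assumes len: "n - 1 \<le> length es" and x: "x \<in> carrier_vec (n - 1)"
    and Rx: "cmat (R_mat n es)\<^sup>T *\<^sub>v x = 0\<^sub>v (length es)"
  shows "x = 0\<^sub>v (n - 1)"
proof (rule eq_vecI)
  fix i assume "i < dim_vec (0\<^sub>v (n - 1) :: complex vec)"
  hence i: "i < n - 1" and il: "i < length es" using len by auto
  have "(cmat (R_mat n es)\<^sup>T *\<^sub>v x) $ i = (\<Sum>j<n - 1. of_real (R_mat n es $$ (j, i)) * x $ j)"
    using il x R_mat_carrier[of n es] by (auto simp: scalar_prod_def cmat_def lessThan_atLeast0 intro!: sum.cong)
  also have "\<dots> = (\<Sum>j<n - 1. if j = i then x $ i else 0)"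
    by (rule sum.cong) (use R_mat_index i il in auto)
  finally show "x $ i = 0\<^sub>v (n - 1) $ i" using Rx i il by simp
qed (use x in simp)

lemma diagm_dims [simp]: "dim_row (diagm k d) = k" "dim_col (diagm k d) = k"
  unfolding diagm_def by simp_all

lemma diagm_carrier [simp]: "diagm k d \<in> carrier_mat k k"
  unfolding diagm_def by simp

lemma diagm_index [simp]: "i < k \<Longrightarrow> j < k \<Longrightarrow> diagm k d $$ (i, j) = (if i = j then d i else 0)"
  unfolding diagm_def by simp

lemma diagm_transpose [simp]: "(diagm k d)\<^sup>T = diagm k d"
  by (rule eq_matI) auto

lemma diagm_mult: "diagm k d * diagm k e = diagm k (\<lambda>i. d i * e i)"
proof (rule eq_matI)
  fix i j assume "i < dim_row (diagm k (\<lambda>i. d i * e i))" "j < dim_col (diagm k (\<lambda>i. d i * e i))"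
  hence ij: "i < k" "j < k" by auto
  have "(diagm k d * diagm k e) $$ (i, j) = (\<Sum>l<k. (if i = l then d i else 0) * (if l = j then e l else 0))"
    using ij by (auto simp: scalar_prod_def lessThan_atLeast0 intro!: sum.cong)
  also have "\<dots> = (\<Sum>l<k. if l = i then (if i = j then d i * e i else 0) else 0)"
    by (rule sum.cong) auto
  finally show "(diagm k d * diagm k e) $$ (i, j) = diagm k (\<lambda>i. d i * e i) $$ (i, j)" using ij by simp
qed auto

lemma diagm_eq_one: "(\<And>i. i < k \<Longrightarrow> d i = 1) \<Longrightarrow> diagm k d = 1\<^sub>m k"
  by (rule eq_matI) auto

lemma minv_diagm:
  fixes eps :: "nat \<Rightarrow> real"
  assumes "\<forall>i<n. eps i > 0"
  shows "minv (diagm n eps) = diagm n (\<lambda>i. 1 / eps i)"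
proof (rule minv_eqI[OF diagm_carrier diagm_carrier])
  have "eps i * (1 / eps i) = 1" if "i < n" for i
  proof -
    have "eps i \<noteq> 0" using assms that by fastforce
    thus ?thesis by simp
  qed
  thus "diagm n eps * diagm n (\<lambda>i. 1 / eps i) = 1\<^sub>m n" unfolding diagm_mult by (rule diagm_eq_one)
qed

lemma diag_powr_diagm: "diag_powr (diagm n eps) p = diagm n (\<lambda>i. eps i powr p)"
  unfolding diag_powr_def by (rule eq_matI) auto

lemma diag_powr_inverse_sqrt_gram:
  assumes eps: "\<forall>i<n. eps i > 0"
  shows "diag_powr (diagm n eps) (-1/2) * (diag_powr (diagm n eps) (-1/2))\<^sup>T = minv (diagm n eps)"
proof -
  have "eps i powr (-1/2) * eps i powr (-1/2) = 1 / eps i" if "i < n" for i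
  proof -
    have "eps i > 0" using eps that by blast
    thus ?thesis by (simp add: powr_add[symmetric] powr_minus_divide abs_of_pos)
  qed
  hence "diagm n (\<lambda>i. eps i powr (-1/2) * eps i powr (-1/2)) = diagm n (\<lambda>i. 1 / eps i)"
    by (intro eq_matI) auto
  thus ?thesis by (simp add: diag_powr_diagm diagm_mult minv_diagm[OF eps])
qed

lemma diag_powr_smult_one: "\<rho> > 0 \<Longrightarrow> diag_powr (\<rho> \<cdot>\<^sub>m 1\<^sub>m m) (1/2) = sqrt \<rho> \<cdot>\<^sub>m 1\<^sub>m m"
  unfolding diag_powr_def by (intro eq_matI) (auto simp: powr_half_sqrt)

lemma cmat_diagm_mult_vec:
  assumes v: "v \<in> carrier_vec n"
  shows "cmat (diagm n f) *\<^sub>v v = vec n (\<lambda>i. of_real (f i) * v $ i)"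
proof (rule eq_vecI)
  fix i assume "i < dim_vec (vec n (\<lambda>i. of_real (f i) * v $ i))"
  hence i: "i < n" by simp
  have "(cmat (diagm n f) *\<^sub>v v) $ i = (\<Sum>j<n. of_real (if i = j then f i else 0) * v $ j)"
    using i v by (auto simp: scalar_prod_def cmat_def lessThan_atLeast0 intro!: sum.cong)
  also have "\<dots> = (\<Sum>j<n. if j = i then of_real (f i) * v $ i else 0)" by (rule sum.cong) auto
  finally show "(cmat (diagm n f) *\<^sub>v v) $ i = vec n (\<lambda>i. of_real (f i) * v $ i) $ i" using i by simp
qed (use v in simp)

lemma L_es_diagm:
  "\<forall>i<n. eps i > 0 \<Longrightarrow>
    L_es n es (diagm n eps) = (D_tree n es)\<^sup>T * diagm n (\<lambda>i. 1 / eps i) * D_tree n es"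
  unfolding L_es_def by (simp add: minv_diagm)

lemma L_es_carrier:
  assumes "\<forall>i<n. eps i > 0"
  shows "L_es n es (diagm n eps) \<in> carrier_mat (n - 1) (n - 1)"
proof -
  have "(D_tree n es)\<^sup>T * diagm n (\<lambda>i. 1 / eps i) \<in> carrier_mat (n - 1) n"
    using D_tree_carrier[of n es] by (intro mult_carrier_mat) auto
  thus ?thesis unfolding L_es_diagm[OF assms] using D_tree_carrier by (rule mult_carrier_mat)
qed

lemma L_es_symmetric:
  assumes "\<forall>i<n. eps i > 0"
  shows "(L_es n es (diagm n eps))\<^sup>T = L_es n es (diagm n eps)"
proof -
  define D where "D = D_tree n es"
  define Ei where "Ei = diagm n (\<lambda>i. 1 / eps i)"
  have D: "D \<in> carrier_mat n (n - 1)" and Dt: "D\<^sup>T \<in> carrier_mat (n - 1) n" and Ei: "Ei \<in> carrier_mat n n"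
    unfolding D_def Ei_def using D_tree_carrier by auto
  have "(D\<^sup>T * Ei * D)\<^sup>T = D\<^sup>T * (Ei * D)"
    using transpose_mult[OF mult_carrier_mat[OF Dt Ei] D] transpose_mult[OF Dt Ei]
    by (simp add: Ei_def)
  also have "\<dots> = D\<^sup>T * Ei * D" by (rule assoc_mult_mat[symmetric, OF Dt Ei D])
  finally show ?thesis unfolding L_es_diagm[OF assms] D_def Ei_def .
qed

lemma L_es_pos_def:
  assumes vg: "valid_graph_with_tree n es" and eps: "\<forall>i<n. eps i > 0"
    and x: "x \<in> carrier_vec (n - 1)" and x0: "x \<noteq> 0\<^sub>v (n - 1)"
  shows "0 < Re (x \<bullet>c (cmat (L_es n es (diagm n eps)) *\<^sub>v x))"
proof -
  define D where "D = D_tree n es"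
  have D: "D \<in> carrier_mat n (n - 1)" unfolding D_def by (rule D_tree_carrier)
  define v where "v = cmat D *\<^sub>v x"
  have v: "v \<in> carrier_vec n" unfolding v_def using D x by simp
  have "v \<noteq> 0\<^sub>v n" using cmat_D_tree_inj[OF vg x] x0 unfolding v_def D_def by blast
  then obtain j where j: "j < n" "v $ j \<noteq> 0" using v by (metis eq_vecI carrier_vecD index_zero_vec)
  define w where "w = cmat (diagm n (\<lambda>i. 1 / eps i)) *\<^sub>v v"
  have w: "w \<in> carrier_vec n" unfolding w_def by (rule cmat_mult_vec_carrier[OF diagm_carrier v])
  have Dt: "D\<^sup>T \<in> carrier_mat (n - 1) n" using D by simp
  have "cmat (L_es n es (diagm n eps)) *\<^sub>v x = cmat (D\<^sup>T * diagm n (\<lambda>i. 1 / eps i)) *\<^sub>v v"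
    unfolding L_es_diagm[OF eps] D_def[symmetric] v_def
    by (rule cmat_mult_mat_vec[OF mult_carrier_mat[OF Dt diagm_carrier] D x])
  also have "\<dots> = cmat D\<^sup>T *\<^sub>v w" unfolding w_def by (rule cmat_mult_mat_vec[OF Dt diagm_carrier v])
  finally have "x \<bullet>c (cmat (L_es n es (diagm n eps)) *\<^sub>v x) = v \<bullet>c w"
    using cscalar_prod_cmat_transpose[OF D x w] unfolding v_def by simp
  \<comment> \<open>x^H L x = (D x)^H E^-1 (D x) is a positively weighted sum of squares\<close>
  also have "\<dots> = (\<Sum>i<n. of_real ((cmod (v $ i))\<^sup>2 / eps i))"
    unfolding w_def cmat_diagm_mult_vec[OF v] using v
    by (auto simp: scalar_prod_def lessThan_atLeast0 complex_norm_square[symmetric] mult_ac intro!: sum.cong)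
  finally have "Re (x \<bullet>c (cmat (L_es n es (diagm n eps)) *\<^sub>v x)) = (\<Sum>i<n. (cmod (v $ i))\<^sup>2 / eps i)"
    by simp
  moreover have "(\<Sum>i<n. (cmod (v $ i))\<^sup>2 / eps i) \<ge> (cmod (v $ j))\<^sup>2 / eps j"
    by (rule member_le_sum) (use eps j in \<open>auto intro: divide_nonneg_pos\<close>)
  moreover have "0 < (cmod (v $ j))\<^sup>2 / eps j" using j eps by simp
  ultimately show ?thesis by linarith
qed

definition noise_input :: "nat \<Rightarrow> (nat \<times> nat) list \<Rightarrow> real mat \<Rightarrow> real mat \<Rightarrow> real \<Rightarrow> real \<Rightarrow> real mat" where
  "noise_input n es W E \<sigma>w \<sigma>v =
     four_block_mat (\<sigma>w \<cdot>\<^sub>m ((D_tree n es)\<^sup>T * diag_powr E (-1/2)))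
       (- \<sigma>v \<cdot>\<^sub>m (L_es n es E * R_mat n es * diag_powr W (1/2))) (0\<^sub>m 0 n) (0\<^sub>m 0 (length es))"

lemma Sigma_tilde_eq:
  "Sigma_tilde n es W E \<sigma>w \<sigma>v s = cmat (R_mat n es)\<^sup>T *
     minv (s \<cdot>\<^sub>m 1\<^sub>m (n - 1) + cmat (L_es n es E * R_mat n es * W * (R_mat n es)\<^sup>T)) *
     cmat (noise_input n es W E \<sigma>w \<sigma>v)"
  unfolding Sigma_tilde_def noise_input_def Let_def ..

lemma four_block_zero_rows_gram:
  assumes A1: "A1 \<in> carrier_mat k a" and A2: "A2 \<in> carrier_mat k b"
  shows "four_block_mat A1 A2 (0\<^sub>m 0 a) (0\<^sub>m 0 b) * (four_block_mat A1 A2 (0\<^sub>m 0 a) (0\<^sub>m 0 b))\<^sup>T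
    = A1 * A1\<^sup>T + A2 * (A2\<^sup>T :: 'x :: comm_ring_1 mat)"
proof -
  have z: "0\<^sub>m 0 a \<in> carrier_mat 0 a" "0\<^sub>m 0 b \<in> carrier_mat 0 b" by auto
  have "four_block_mat A1 A2 (0\<^sub>m 0 a) (0\<^sub>m 0 b) * (four_block_mat A1 A2 (0\<^sub>m 0 a) (0\<^sub>m 0 b))\<^sup>T
      = four_block_mat (A1 * A1\<^sup>T + A2 * A2\<^sup>T) (A1 * 0\<^sub>m a 0 + A2 * 0\<^sub>m b 0)
          (0\<^sub>m 0 a * A1\<^sup>T + 0\<^sub>m 0 b * A2\<^sup>T) (0\<^sub>m 0 a * 0\<^sub>m a 0 + 0\<^sub>m 0 b * 0\<^sub>m b 0)"
    unfolding transpose_four_block_mat[OF A1 A2 z] zero_transpose_mat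
    by (intro mult_four_block_mat) (use A1 A2 in auto)
  also have "\<dots> = A1 * A1\<^sup>T + A2 * A2\<^sup>T"
    using A1 A2 by (intro eq_matI) auto
  finally show ?thesis .
qed

lemma noise_input_gram:
  fixes n :: nat and es :: "(nat \<times> nat) list" and eps :: "nat \<Rightarrow> real" and \<rho> \<sigma>w \<sigma>v :: real
  assumes eps: "\<forall>i<n. eps i > 0" and rho: "\<rho> > 0"
  defines "L \<equiv> L_es n es (diagm n eps)" and "R \<equiv> R_mat n es"
    and "B \<equiv> noise_input n es (\<rho> \<cdot>\<^sub>m 1\<^sub>m (length es)) (diagm n eps) \<sigma>w \<sigma>v"
  shows "B * B\<^sup>T = \<sigma>w\<^sup>2 \<cdot>\<^sub>m L + (\<sigma>v\<^sup>2 * \<rho>) \<cdot>\<^sub>m (L * (R * R\<^sup>T) * L)"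
proof -
  define D where "D = D_tree n es"
  define Eh where "Eh = diag_powr (diagm n eps) (-1/2)"
  have D: "D \<in> carrier_mat n (n - 1)" and Dt: "D\<^sup>T \<in> carrier_mat (n - 1) n"
    unfolding D_def using D_tree_carrier by auto
  have Eh: "Eh \<in> carrier_mat n n" and EhT: "Eh\<^sup>T \<in> carrier_mat n n"
    unfolding Eh_def diag_powr_diagm by auto
  have L: "L \<in> carrier_mat (n - 1) (n - 1)" unfolding L_def by (rule L_es_carrier[OF eps])
  have R: "R \<in> carrier_mat (n - 1) (length es)" unfolding R_def by (rule R_mat_carrier)
  have LR: "L * R \<in> carrier_mat (n - 1) (length es)" using L R by simp
  have "(D\<^sup>T * Eh) * (D\<^sup>T * Eh)\<^sup>T = D\<^sup>T * ((Eh * Eh\<^sup>T) * D)"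
    using transpose_mult[OF Dt Eh] assoc_mult_mat[OF Dt Eh mult_carrier_mat[OF EhT D]]
      assoc_mult_mat[OF Eh EhT D] by simp
  also have "\<dots> = L"
    unfolding L_def Eh_def diag_powr_inverse_sqrt_gram[OF eps] L_es_def D_def minv_diagm[OF eps]
    using D_tree_carrier by (simp add: assoc_mult_mat[of _ "n - 1" n _ n _ "n - 1"])
  finally have A1: "(\<sigma>w \<cdot>\<^sub>m (D\<^sup>T * Eh)) * (\<sigma>w \<cdot>\<^sub>m (D\<^sup>T * Eh))\<^sup>T = \<sigma>w\<^sup>2 \<cdot>\<^sub>m L"
    using smult_gram_mat[of "D\<^sup>T * Eh" "n - 1" n \<sigma>w] Dt Eh by simp
  have "L * R * (sqrt \<rho> \<cdot>\<^sub>m 1\<^sub>m (length es)) = sqrt \<rho> \<cdot>\<^sub>m (L * R)"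
    using mult_smult_distrib[OF LR one_carrier_mat, of "sqrt \<rho>"] right_mult_one_mat[OF LR] by simp
  hence A2_eq: "- \<sigma>v \<cdot>\<^sub>m (L * R * (sqrt \<rho> \<cdot>\<^sub>m 1\<^sub>m (length es))) = (- \<sigma>v * sqrt \<rho>) \<cdot>\<^sub>m (L * R)"
    by (simp add: smult_smult_mat)
  have Rt: "R\<^sup>T \<in> carrier_mat (length es) (n - 1)" using R by simp
  have "(L * R) * (L * R)\<^sup>T = (L * R) * (R\<^sup>T * L)"
    using transpose_mult[OF L R] L_es_symmetric[OF eps] by (simp add: L_def)
  also have "\<dots> = L * (R * R\<^sup>T) * L"
    using assoc_mult_mat[OF LR Rt L, symmetric] assoc_mult_mat[OF L R Rt] by simp
  finally have A2: "(- \<sigma>v \<cdot>\<^sub>m (L * R * (sqrt \<rho> \<cdot>\<^sub>m 1\<^sub>m (length es))))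
      * (- \<sigma>v \<cdot>\<^sub>m (L * R * (sqrt \<rho> \<cdot>\<^sub>m 1\<^sub>m (length es))))\<^sup>T = (\<sigma>v\<^sup>2 * \<rho>) \<cdot>\<^sub>m (L * (R * R\<^sup>T) * L)"
    unfolding A2_eq using smult_gram_mat[OF LR, of "- \<sigma>v * sqrt \<rho>"] rho
    by (simp add: power_mult_distrib)
  show ?thesis
    unfolding B_def noise_input_def diag_powr_smult_one[OF rho] L_def[symmetric] R_def[symmetric]
      D_def[symmetric] Eh_def[symmetric]
    using four_block_zero_rows_gram[of "\<sigma>w \<cdot>\<^sub>m (D\<^sup>T * Eh)" "n - 1" n] A1 A2 Dt Eh LR
    by simp
qed

lemma network_transfer_graph:
  assumes vg: "valid_graph_with_tree n es" and eps: "\<forall>i<n. eps i > 0" and rho: "\<rho> > 0"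
  shows "network_transfer (R_mat n es) (L_es n es (diagm n eps))
    (noise_input n es (\<rho> \<cdot>\<^sub>m 1\<^sub>m (length es)) (diagm n eps) \<sigma>w \<sigma>v)
    (n - 1) (length es) (n + length es) \<rho> \<sigma>w \<sigma>v"
proof
  have "n \<ge> 2" "n - 1 \<le> length es" using vg unfolding valid_graph_with_tree_def by auto
  thus "n - 1 > 0" "n + length es > 0" by auto
  show "R_mat n es \<in> carrier_mat (n - 1) (length es)" by (rule R_mat_carrier)
  show "L_es n es (diagm n eps) \<in> carrier_mat (n - 1) (n - 1)" by (rule L_es_carrier[OF eps])
  show "noise_input n es (\<rho> \<cdot>\<^sub>m 1\<^sub>m (length es)) (diagm n eps) \<sigma>w \<sigma>v \<in> carrier_mat (n - 1) (n + length es)"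
  proof -
    have "\<sigma>w \<cdot>\<^sub>m ((D_tree n es)\<^sup>T * diag_powr (diagm n eps) (-1/2)) \<in> carrier_mat (n - 1) n"
      using D_tree_carrier[of n es] by (simp add: diag_powr_diagm)
    from four_block_carrier_mat[OF this, of "0\<^sub>m 0 (length es)" 0 "length es"] show ?thesis
      unfolding noise_input_def by simp
  qed
  show "(L_es n es (diagm n eps))\<^sup>T = L_es n es (diagm n eps)" by (rule L_es_symmetric[OF eps])
  show "\<And>x. x \<in> carrier_vec (n - 1) \<Longrightarrow> x \<noteq> 0\<^sub>v (n - 1) \<Longrightarrow>
      0 < Re (x \<bullet>c (cmat (L_es n es (diagm n eps)) *\<^sub>v x))"
    by (rule L_es_pos_def[OF vg eps])
  show "\<And>x. x \<in> carrier_vec (n - 1) \<Longrightarrow> cmat (R_mat n es)\<^sup>T *\<^sub>v x = 0\<^sub>v (length es) \<Longrightarrow> x = 0\<^sub>v (n - 1)"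
    by (rule cmat_R_mat_transpose_inj[OF \<open>n - 1 \<le> length es\<close>])
  show "\<rho> > 0" by (rule rho)
  show "noise_input n es (\<rho> \<cdot>\<^sub>m 1\<^sub>m (length es)) (diagm n eps) \<sigma>w \<sigma>v *
      (noise_input n es (\<rho> \<cdot>\<^sub>m 1\<^sub>m (length es)) (diagm n eps) \<sigma>w \<sigma>v)\<^sup>T =
    \<sigma>w\<^sup>2 \<cdot>\<^sub>m L_es n es (diagm n eps) + (\<sigma>v\<^sup>2 * \<rho>) \<cdot>\<^sub>m
      (L_es n es (diagm n eps) * (R_mat n es * (R_mat n es)\<^sup>T) * L_es n es (diagm n eps))"
    by (rule noise_input_gram[OF eps rho])
qed

theorem corollary1:
  fixes n :: nat and es :: "(nat \<times> nat) list" and eps :: "nat \<Rightarrow> real"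
    and \<rho> \<sigma>w \<sigma>v :: real and W E :: "real mat"
  assumes "valid_graph_with_tree n es"
    and "\<forall>i < n. eps i > 0"
    and "E = diagm n eps"
    and "\<rho> > 0"
    and "W = \<rho> \<cdot>\<^sub>m 1\<^sub>m (length es)"
  shows "(hinf_norm (Sigma_tilde n es W E \<sigma>w \<sigma>v))\<^sup>2 =
           1 / \<rho>\<^sup>2 * \<sigma>w\<^sup>2 * sigma_max_real ((R_mat n es)\<^sup>T *
              minv (R_mat n es * (R_mat n es)\<^sup>T * L_es n es E * R_mat n es * (R_mat n es)\<^sup>T)
              * R_mat n es)
         + 1 / \<rho> * \<sigma>v\<^sup>2"
proof -
  interpret network_transfer "R_mat n es" "L_es n es E" "noise_input n es W E \<sigma>w \<sigma>v"
    "n - 1" "length es" "n + length es" \<rho> \<sigma>w \<sigma>v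
    unfolding assms(3,5) by (rule network_transfer_graph[OF assms(1,2,4)])
  have "Sigma_tilde n es W E \<sigma>w \<sigma>v = transfer"
    unfolding Sigma_tilde_eq assms(5) scaled_identity_weights ..
  thus ?thesis using hinf_norm_transfer peak_nonneg by simp
qed

end
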